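(* Let $f$ satisfy the standing assumption described in the context, let $\alpha,\beta>0$, $\epsilon'>0$, $0<\eta_x\le(9L_\Phi+18\alpha+28\beta)^{-1}$, and consider the sequence generated by Cubic-GDA. Let $T'=\min\{t\ge 1:\ \max(\|s_{t-1}\|,\|s_t\|)\le\epsilon'\}$ ($T'=\infty$ if no such $t$). Suppose that for all integers $0\le t\le T'-1$, $$\|\nabla\Phi(x_t)-\nabla_1 f(x_t,y_{t+1})\|\le \beta(\|s_t\|^2+\epsilon'^2),\qquad \|\nabla^2\Phi(x_t)-G(x_t,y_{t+1})\|\le \alpha(\|s_t\|+\epsilon').$$ If $T\ge \frac{\Phi(x_0)-\Phi^*+(L_\Phi+3\alpha+4\beta)\epsilon'^3}{(L_\Phi+\alpha+\beta)\epsilon'^3}$, then $T'\le \frac{\Phi(x_0)-\Phi^*+(L_\Phi+3\alpha+4\beta)\epsilon'^3}{(L_\Phi+\alpha+\beta)\epsilon'^3}\le T$, and $$\|\nabla\Phi(x_{T'})\|\le\Big(\frac{1}{2\eta_x}+L_\Phi+2\alpha+2\beta\Big)\epsilon'^2,\qquad \nabla^2\Phi(x_{T'})\succeq-\Big(\frac{1}{2\eta_x}+L_\Phi+2\alpha\Big)\epsilon' I.$$ The same conclusion holds for Stochastic Cubic-GDA (finite-sum setting described in the context) when the two error bounds hold with $\nabla_1 f(x_t,y_{t+1})$, $G(x_t,y_{t+1})$ replaced by $\widehat\nabla_1 f(x_t,y_{t+1})$, $\widehat G(x_t,y_{t+1})$.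
   Context: Standing assumption: $f:\mathbb{R}^m\times\mathbb{R}^n\to\mathbb{R}$ is twice continuously differentiable; $\nabla f$ is $L_1$-Lipschitz; $y\mapsto f(x,y)$ is $\mu$-strongly concave for each $x$ ($\mu>0$); the Jacobian blocks $\nabla_{11}f,\nabla_{12}f,\nabla_{21}f,\nabla_{22}f$ are $L_2$-Lipschitz in $(x,y)$; $\Phi(x):=\max_y f(x,y)$ is bounded below with compact sub-level sets; $\Phi^*:=\min_x\Phi(x)$. Let $\kappa=L_1/\mu$, $L_\Phi=L_2(1+\kappa)^3$, $G(x,y)=\big[\nabla_{11} f - \nabla_{12} f (\nabla_{22} f)^{-1} \nabla_{21} f\big](x,y)$ ($\nabla_{12}f$ the Jacobian of $\nabla_1 f$ in $y$, $\nabla_{21}f$ that of $\nabla_2 f$ in $x$). Matrix norms are spectral. Cubic-GDA: given $x_0,y_0,\eta_x,\eta_y>0,\epsilon'>0$ and integers $N_t\ge0$; convention $\|s_0\|:=\epsilon'$. For $t=0,1,2,\dots$: $\widetilde y_0=y_t$, $\widetilde y_{k+1}=\widetilde y_k+\eta_y\nabla_2 f(x_t,\widetilde y_k)$ ($k<N_t$), $y_{t+1}=\widetilde y_{N_t}$; $s_{t+1}$ a global minimizer of $\nabla_1 f(x_t,y_{t+1})^\top s+\tfrac12 s^\top G(x_t,y_{t+1})s+\tfrac{1}{6\eta_x}\|s\|^3$; $x_{t+1}=x_t+s_{t+1}$. Stochastic Cubic-GDA: $f=\frac1N\sum_{i=1}^N f_i$, each $f_i$ twice continuously differentiable and $\mu$-strongly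 concave in $y$; same outer recursion except $y_{t+1}=\sum_{k=0}^{N_t-1}\frac{2k}{N_t(N_t-1)}\widetilde y_k$ with $\widetilde y_0=y_t$, $\widetilde y_{k+1}=\widetilde y_k+\frac{2}{\mu(k+1)}\nabla_2 f_{\xi_k}(x_t,\widetilde y_k)$ ($\xi_k$ a sampled index), and the cubic model uses minibatch estimators $\widehat\nabla_1 f=\frac1{|B_1|}\sum_{i\in B_1}\nabla_1 f_i$, $\widehat\nabla_{k\ell}f=\frac1{|B_{k\ell}|}\sum_{i\in B_{k\ell}}\nabla_{k\ell}f_i$, $\widehat G=\widehat\nabla_{11} f - \widehat\nabla_{12} f (\widehat\nabla_{22} f)^{-1} \widehat\nabla_{21} f$ at $(x_t,y_{t+1})$, for minibatches (multisets sampled with replacement) $B_1(t),B_{k\ell}(t)$. *)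

theory Defs
  imports "HOL-Analysis.Analysis" "HOL-Library.Multiset" "HOL-Library.Extended_Nat"
begin

text \<open>The first-order partial gradients are
 g1 (= grad_1 f) and g2 (= grad_2 f); the Jacobian blocks are H11, H12 (Jacobian of g1 in y),
 H21 (Jacobian of g2 in x), H22.\<close>

definition C2_data ::
  "((real^'m) \<times> (real^'n) \<Rightarrow> real) \<Rightarrow>
   ((real^'m) \<times> (real^'n) \<Rightarrow> real^'m) \<Rightarrow> ((real^'m) \<times> (real^'n) \<Rightarrow> real^'n) \<Rightarrow>
   ((real^'m) \<times> (real^'n) \<Rightarrow> real^'m^'m) \<Rightarrow> ((real^'m) \<times> (real^'n) \<Rightarrow> real^'n^'m) \<Rightarrow>
   ((real^'m) \<times> (real^'n) \<Rightarrow> real^'m^'n) \<Rightarrow> ((real^'m) \<times> (real^'n) \<Rightarrow> real^'n^'n) \<Rightarrow> bool"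
where
  "C2_data f g1 g2 H11 H12 H21 H22 \<longleftrightarrow>
     (\<forall>z. (f has_derivative (\<lambda>(h, k). g1 z \<bullet> h + g2 z \<bullet> k)) (at z)) \<and>
     (\<forall>z. ((\<lambda>w. (g1 w, g2 w)) has_derivative
            (\<lambda>(h, k). (H11 z *v h + H12 z *v k, H21 z *v h + H22 z *v k))) (at z)) \<and>
     continuous_on UNIV H11 \<and> continuous_on UNIV H12 \<and>
     continuous_on UNIV H21 \<and> continuous_on UNIV H22"

definition strongly_concave :: "real \<Rightarrow> ('a::real_normed_vector \<Rightarrow> real) \<Rightarrow> bool" where
  "strongly_concave \<mu> g \<longleftrightarrow>
     (\<forall>u v. \<forall>t\<in>{0..1}. t * g u + (1 - t) * g v + \<mu> / 2 * t * (1 - t) * (norm (u - v))^2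
                          \<le> g (t *\<^sub>R u + (1 - t) *\<^sub>R v))"

definition mnorm :: "real^'a^'b \<Rightarrow> real" where
  "mnorm A = onorm (\<lambda>v. A *v v)"

definition Phi :: "((real^'m) \<times> (real^'n) \<Rightarrow> real) \<Rightarrow> real^'m \<Rightarrow> real" where
  "Phi f x = (SUP y. f (x, y))"

definition vgrad :: "(real^'m \<Rightarrow> real) \<Rightarrow> real^'m \<Rightarrow> real^'m" where
  "vgrad F x = (\<chi> i. frechet_derivative F (at x) (axis i 1))"

definition hess :: "(real^'m \<Rightarrow> real) \<Rightarrow> real^'m \<Rightarrow> real^'m^'m" where
  "hess F x = matrix (frechet_derivative (vgrad F) (at x))"

definition standing_assumption ::
  "((real^'m) \<times> (real^'n) \<Rightarrow> real) \<Rightarrow>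
   ((real^'m) \<times> (real^'n) \<Rightarrow> real^'m) \<Rightarrow> ((real^'m) \<times> (real^'n) \<Rightarrow> real^'n) \<Rightarrow>
   ((real^'m) \<times> (real^'n) \<Rightarrow> real^'m^'m) \<Rightarrow> ((real^'m) \<times> (real^'n) \<Rightarrow> real^'n^'m) \<Rightarrow>
   ((real^'m) \<times> (real^'n) \<Rightarrow> real^'m^'n) \<Rightarrow> ((real^'m) \<times> (real^'n) \<Rightarrow> real^'n^'n) \<Rightarrow>
   real \<Rightarrow> real \<Rightarrow> real \<Rightarrow> bool"
where
  "standing_assumption f g1 g2 H11 H12 H21 H22 L1 L2 \<mu> \<longleftrightarrow>
     C2_data f g1 g2 H11 H12 H21 H22 \<and>
     (\<forall>z z'. norm ((g1 z, g2 z) - (g1 z', g2 z')) \<le> L1 * norm (z - z')) \<and>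
     \<mu> > 0 \<and> (\<forall>x. strongly_concave \<mu> (\<lambda>y. f (x, y))) \<and>
     (\<forall>z z'. mnorm (H11 z - H11 z') \<le> L2 * norm (z - z')) \<and>
     (\<forall>z z'. mnorm (H12 z - H12 z') \<le> L2 * norm (z - z')) \<and>
     (\<forall>z z'. mnorm (H21 z - H21 z') \<le> L2 * norm (z - z')) \<and>
     (\<forall>z z'. mnorm (H22 z - H22 z') \<le> L2 * norm (z - z')) \<and>
     bdd_below (range (Phi f)) \<and> (\<forall>c. compact {x. Phi f x \<le> c})"

definition schurG :: "real^'m^'m \<Rightarrow> real^'n^'m \<Rightarrow> real^'m^'n \<Rightarrow> real^'n^'n \<Rightarrow> real^'m^'m" where
  "schurG A B C D = A - B ** matrix_inv D ** C"

definition cubic_model :: "real^'m \<Rightarrow> real^'m^'m \<Rightarrow> real \<Rightarrow> real^'m \<Rightarrow> real" where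
  "cubic_model g H \<eta> s = g \<bullet> s + 1/2 * (s \<bullet> (H *v s)) + 1 / (6 * \<eta>) * norm s ^ 3"

definition is_cubic_min :: "real^'m \<Rightarrow> real^'m^'m \<Rightarrow> real \<Rightarrow> real^'m \<Rightarrow> bool" where
  "is_cubic_min g H \<eta> s \<longleftrightarrow> (\<forall>s'. cubic_model g H \<eta> s \<le> cubic_model g H \<eta> s')"

text \<open>Deterministic Cubic-GDA trajectory (x_t, y_t, s_t); s 0 is a dummy with norm eps'.\<close>
definition cubic_gda ::
  "((real^'m) \<times> (real^'n) \<Rightarrow> real^'m) \<Rightarrow> ((real^'m) \<times> (real^'n) \<Rightarrow> real^'n) \<Rightarrow>
   ((real^'m) \<times> (real^'n) \<Rightarrow> real^'m^'m) \<Rightarrow> ((real^'m) \<times> (real^'n) \<Rightarrow> real^'n^'m) \<Rightarrow>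
   ((real^'m) \<times> (real^'n) \<Rightarrow> real^'m^'n) \<Rightarrow> ((real^'m) \<times> (real^'n) \<Rightarrow> real^'n^'n) \<Rightarrow>
   real \<Rightarrow> real \<Rightarrow> real \<Rightarrow> (nat \<Rightarrow> nat) \<Rightarrow>
   (nat \<Rightarrow> real^'m) \<Rightarrow> (nat \<Rightarrow> real^'n) \<Rightarrow> (nat \<Rightarrow> real^'m) \<Rightarrow> bool"
where
  "cubic_gda g1 g2 H11 H12 H21 H22 \<eta>x \<eta>y \<epsilon>' N x y s \<longleftrightarrow>
     norm (s 0) = \<epsilon>' \<and>
     (\<forall>t. y (Suc t) = ((\<lambda>w. w + \<eta>y *\<^sub>R g2 (x t, w)) ^^ N t) (y t) \<and>
          is_cubic_min (g1 (x t, y (Suc t)))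
             (schurG (H11 (x t, y (Suc t))) (H12 (x t, y (Suc t)))
                     (H21 (x t, y (Suc t))) (H22 (x t, y (Suc t)))) \<eta>x (s (Suc t)) \<and>
          x (Suc t) = x t + s (Suc t))"

fun sgd_iter ::
  "(nat \<Rightarrow> (real^'m) \<times> (real^'n) \<Rightarrow> real^'n) \<Rightarrow> real \<Rightarrow> (nat \<Rightarrow> nat) \<Rightarrow> real^'m \<Rightarrow> real^'n \<Rightarrow> nat \<Rightarrow> real^'n"
where
  "sgd_iter G2 \<mu> \<xi> x y0 0 = y0"
| "sgd_iter G2 \<mu> \<xi> x y0 (Suc k) =
     sgd_iter G2 \<mu> \<xi> x y0 k + (2 / (\<mu> * real (Suc k))) *\<^sub>R G2 (\<xi> k) (x, sgd_iter G2 \<mu> \<xi> x y0 k)"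

text \<open>Minibatch average over a multiset of indices (sampled with replacement).\<close>
definition mb_avg :: "nat multiset \<Rightarrow> (nat \<Rightarrow> 'a::real_vector) \<Rightarrow> 'a" where
  "mb_avg B F = (1 / real (size B)) *\<^sub>R (\<Sum>i\<in>#B. F i)"

definition scubic_gda ::
  "nat \<Rightarrow> (nat \<Rightarrow> (real^'m) \<times> (real^'n) \<Rightarrow> real^'m) \<Rightarrow> (nat \<Rightarrow> (real^'m) \<times> (real^'n) \<Rightarrow> real^'n) \<Rightarrow>
   (nat \<Rightarrow> (real^'m) \<times> (real^'n) \<Rightarrow> real^'m^'m) \<Rightarrow> (nat \<Rightarrow> (real^'m) \<times> (real^'n) \<Rightarrow> real^'n^'m) \<Rightarrow>
   (nat \<Rightarrow> (real^'m) \<times> (real^'n) \<Rightarrow> real^'m^'n) \<Rightarrow> (nat \<Rightarrow> (real^'m) \<times> (real^'n) \<Rightarrow> real^'n^'n) \<Rightarrow>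
   real \<Rightarrow> real \<Rightarrow> real \<Rightarrow> (nat \<Rightarrow> nat) \<Rightarrow> (nat \<Rightarrow> nat \<Rightarrow> nat) \<Rightarrow>
   (nat \<Rightarrow> nat multiset) \<Rightarrow> (nat \<Rightarrow> nat multiset) \<Rightarrow> (nat \<Rightarrow> nat multiset) \<Rightarrow>
   (nat \<Rightarrow> nat multiset) \<Rightarrow> (nat \<Rightarrow> nat multiset) \<Rightarrow>
   (nat \<Rightarrow> real^'m) \<Rightarrow> (nat \<Rightarrow> real^'n) \<Rightarrow> (nat \<Rightarrow> real^'m) \<Rightarrow> bool"
where
  "scubic_gda Nf G1 G2 H11 H12 H21 H22 \<mu> \<eta>x \<epsilon>' N \<xi> B1 B11 B12 B21 B22 x y s \<longleftrightarrow>
     norm (s 0) = \<epsilon>' \<and>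
     (\<forall>t. (\<forall>k. \<xi> t k < Nf) \<and>
          (\<forall>B\<in>{B1 t, B11 t, B12 t, B21 t, B22 t}. B \<noteq> {#} \<and> (\<forall>i\<in>#B. i < Nf)) \<and>
          y (Suc t) = (\<Sum>k<N t. (2 * real k / (real (N t) * (real (N t) - 1)))
                                 *\<^sub>R sgd_iter G2 \<mu> (\<xi> t) (x t) (y t) k) \<and>
          is_cubic_min (mb_avg (B1 t) (\<lambda>i. G1 i (x t, y (Suc t))))
             (schurG (mb_avg (B11 t) (\<lambda>i. H11 i (x t, y (Suc t))))
                     (mb_avg (B12 t) (\<lambda>i. H12 i (x t, y (Suc t))))
                     (mb_avg (B21 t) (\<lambda>i. H21 i (x t, y (Suc t))))
                     (mb_avg (B22 t) (\<lambda>i. H22 i (x t, y (Suc t))))) \<eta>x (s (Suc t)) \<and>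
          x (Suc t) = x t + s (Suc t))"

definition stop_time :: "(nat \<Rightarrow> real^'m) \<Rightarrow> real \<Rightarrow> enat" where
  "stop_time s \<epsilon>' =
     (if \<exists>t\<ge>1. max (norm (s (t - 1))) (norm (s t)) \<le> \<epsilon>'
      then enat (LEAST t. 1 \<le> t \<and> max (norm (s (t - 1))) (norm (s t)) \<le> \<epsilon>')
      else \<infinity>)"

end

theory Submission
  imports Defs
begin

text \<open>Under the standing assumption \<open>y \<mapsto> f (x, y)\<close> has a unique maximiser \<open>y\<^sup>*(x)\<close>, which
  is \<open>L1/\<mu>\<close>-Lipschitz, and \<open>\<Phi> x = f (x, y\<^sup>*(x))\<close> has gradient \<open>\<nabla>\<^sub>1f (x, y\<^sup>*(x))\<close> and Hessian
  \<open>G (x, y\<^sup>*(x))\<close>, the Schur complement, which is \<open>L\<^sub>\<Phi>\<close>-Lipschitz. Both algorithms take exact steps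
  of a cubic-regularised Newton method whose model gradient and Hessian are inexact. The first- and
  second-order optimality conditions of the cubic model, the cubic Taylor bound for \<open>\<Phi>\<close> and Young's
  inequality give \<open>\<Phi>(x\<^sub>t\<^sub>+\<^sub>1) + c\<parallel>s\<^sub>t\<^sub>+\<^sub>1\<parallel>\<^sup>3 \<le> \<Phi>(x\<^sub>t) + d(\<parallel>s\<^sub>t\<parallel>\<^sup>3 + \<epsilon>'\<^sup>3)\<close>. Before stopping, one of
  any two consecutive steps is longer than \<open>\<epsilon>'\<close>, so \<open>\<Phi>\<close> drops by \<open>(L\<^sub>\<Phi> + \<alpha> + \<beta>)\<epsilon>'\<^sup>3\<close> per step on
  average, which bounds \<open>T'\<close>. At \<open>T'\<close> both steps are short, and the same optimality conditions bound
  the gradient and the negative curvature of \<open>\<Phi>\<close> at \<open>x\<^sub>T\<^sub>'\<close>.\<close>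

lemma nonneg_if_nonneg_perturbation:
  fixes a K :: real
  assumes "\<And>t. 0 < t \<Longrightarrow> t < 1 \<Longrightarrow> 0 \<le> a + K * t"
  shows "0 \<le> a"
proof -
  have "((\<lambda>t. a + K * t) \<longlongrightarrow> a) (at_right 0)"
    by (auto intro!: tendsto_eq_intros)
  moreover have "\<forall>\<^sub>F t in at_right 0. 0 \<le> a + K * t"
    using assms by (auto simp: eventually_at_right_field intro!: exI[of _ 1])
  ultimately show ?thesis
    by (rule tendsto_lowerbound) simp
qed

lemma has_real_derivative_ge_of_increment:
  fixes \<phi> :: "real \<Rightarrow> real"
  assumes D: "(\<phi> has_real_derivative D) (at 0)"
    and incr: "\<And>t. 0 < t \<Longrightarrow> t < 1 \<Longrightarrow> t * (a - b * t) \<le> \<phi> t - \<phi> 0"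
  shows "a \<le> D"
proof -
  have "((\<lambda>t. (\<phi> t - \<phi> 0) / t) \<longlongrightarrow> D) (at_right 0)"
    using D by (auto simp: has_field_derivative_iff intro: filterlim_mono at_le)
  moreover have "((\<lambda>t. a - b * t) \<longlongrightarrow> a) (at_right 0)"
    by (auto intro!: tendsto_eq_intros)
  moreover have "\<forall>\<^sub>F t in at_right 0. a - b * t \<le> (\<phi> t - \<phi> 0) / t"
    using incr by (auto simp: eventually_at_right_field pos_le_divide_eq mult.commute intro!: exI[of _ 1])
  ultimately show ?thesis
    by (rule tendsto_le[OF trivial_limit_at_right_real])
qed

lemma has_real_derivative_along_line:
  fixes F :: "'a::real_normed_vector \<Rightarrow> real"
  assumes "(F has_derivative D) (at (x + t *\<^sub>R s))"
  shows "((\<lambda>t. F (x + t *\<^sub>R s)) has_real_derivative D s) (at t)"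
proof -
  have "((\<lambda>t. x + t *\<^sub>R s) has_derivative (\<lambda>h. h *\<^sub>R s)) (at t)"
    by (auto intro!: derivative_eq_intros)
  from has_derivative_compose[OF this assms]
  have "((\<lambda>t. F (x + t *\<^sub>R s)) has_derivative (\<lambda>h. D (h *\<^sub>R s))) (at t)"
    by (simp add: o_def)
  moreover have "(\<lambda>h. D (h *\<^sub>R s)) = (*) (D s)"
    using linear_scale[OF has_derivative_linear[OF assms]] by (auto simp: fun_eq_iff mult.commute)
  ultimately show ?thesis unfolding has_field_derivative_def by simp
qed

lemma has_derivative_norm_le_of_lipschitz:
  fixes F :: "'a::real_normed_vector \<Rightarrow> 'b::real_normed_vector"
  assumes D: "(F has_derivative F') (at z)" and lip: "\<And>z'. norm (F z' - F z) \<le> L * norm (z' - z)"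
  shows "norm (F' w) \<le> L * norm w"
proof (cases "w = 0")
  case True
  then show ?thesis using has_derivative_linear[OF D] by (simp add: linear_0)
next
  case False
  have "norm (F' w) \<le> L * norm w + e" if e: "e > 0" for e
  proof -
    define e' where "e' = e / norm w"
    have "e' > 0" using e False by (simp add: e'_def)
    then obtain d where d: "d > 0"
      and rem: "\<And>y. norm (y - z) < d \<Longrightarrow> norm (F y - F z - F' (y - z)) \<le> e' * norm (y - z)"
      using D unfolding has_derivative_at_alt by blast
    define t where "t = d / (2 * norm w)"
    have t: "t > 0" "norm (t *\<^sub>R w) < d" using d False by (auto simp: t_def)
    have "t *\<^sub>R F' w = (F (z + t *\<^sub>R w) - F z) - (F (z + t *\<^sub>R w) - F z - F' (t *\<^sub>R w))"
      using linear_scale[OF has_derivative_linear[OF D]] by simp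
    then have "norm (t *\<^sub>R F' w) \<le> L * norm (t *\<^sub>R w) + e' * norm (t *\<^sub>R w)"
      using norm_triangle_ineq4 lip[of "z + t *\<^sub>R w"] rem[of "z + t *\<^sub>R w"] t
      by (smt (verit) add_diff_cancel_left')
    then have "t * norm (F' w) \<le> t * (L * norm w + e' * norm w)"
      using t by (simp add: algebra_simps)
    then show ?thesis using t False by (simp add: e'_def)
  qed
  then show ?thesis by (rule field_le_epsilon)
qed

lemma lipschitz_const_nonneg:
  fixes D :: "(real^'m) \<times> (real^'n) \<Rightarrow> (real^'m) \<times> (real^'n) \<Rightarrow> real"
  assumes "\<And>z z'. 0 \<le> D z z'" and "\<And>z z'. D z z' \<le> L * norm (z - z')"
  shows "L \<ge> 0"
proof -
  define z :: "(real^'m) \<times> (real^'n)" where "z = (axis undefined 1, 0)"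
  have "0 \<le> L * norm (z - 0)" using assms(1,2)[of z 0] by linarith
  moreover have "norm (z - 0) = 1" by (simp add: z_def)
  ultimately show ?thesis by simp
qed

lemma young_cube:
  fixes a r :: real
  assumes "a \<ge> 0" "r \<ge> 0"
  shows "a\<^sup>2 * r \<le> (2 * a ^ 3 + r ^ 3) / 3"
proof -
  have "0 \<le> (a - r)\<^sup>2 * (2 * a + r)" using assms by simp
  also have "(a - r)\<^sup>2 * (2 * a + r) = 2 * a ^ 3 + r ^ 3 - 3 * (a\<^sup>2 * r)"
    by (simp add: power2_eq_square power3_eq_cube algebra_simps)
  finally show ?thesis by simp
qed

lemma power2_norm_add_scaleR:
  fixes v s :: "'a::real_inner"
  shows "(norm (v + t *\<^sub>R s))\<^sup>2 = (norm v)\<^sup>2 + 2 * t * (v \<bullet> s) + t\<^sup>2 * (norm s)\<^sup>2"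
  unfolding power2_norm_eq_inner
  by (simp add: inner_add_left inner_add_right inner_commute algebra_simps power2_eq_square)

lemma mnorm_nonneg: "0 \<le> mnorm A"
  unfolding mnorm_def by (rule onorm_pos_le) simp

lemma norm_matrix_vector_le_mnorm: "norm (A *v v) \<le> mnorm A * norm v"
  unfolding mnorm_def by (rule onorm[OF matrix_vector_mul_bounded_linear])

lemma norm_matrix_vector_le_of_mnorm_le: "mnorm A \<le> c \<Longrightarrow> norm (A *v v) \<le> c * norm v"
  using norm_matrix_vector_le_mnorm[of A v] mult_right_mono[of "mnorm A" c "norm v"] by simp

lemma abs_inner_matrix_le_mnorm: "\<bar>u \<bullet> (A *v v)\<bar> \<le> mnorm A * norm u * norm v"
proof -
  have "\<bar>u \<bullet> (A *v v)\<bar> \<le> norm u * norm (A *v v)" by (rule Cauchy_Schwarz_ineq2)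
  also have "\<dots> \<le> norm u * (mnorm A * norm v)"
    by (intro mult_left_mono norm_matrix_vector_le_mnorm) auto
  finally show ?thesis by (simp add: algebra_simps)
qed

lemma matrix_vector_mult_uminus_left: "(- A) *v x = - (A *v (x :: real^'a))"
  by (simp add: matrix_vector_mult_def vec_eq_iff sum_negf)

lemma matrix_vector_mult_uminus_right: "(A :: real^'a^'b) *v (- x) = - (A *v x)"
  by (simp add: matrix_vector_mult_def vec_eq_iff sum_negf)
section \<open>Minimisers of the cubic model\<close>

lemma quadratic_form_add_scaleR:
  fixes G :: "real^'m^'m"
  shows "(s + t *\<^sub>R w) \<bullet> (G *v (s + t *\<^sub>R w)) =
     s \<bullet> (G *v s) + t * (s \<bullet> (G *v w) + w \<bullet> (G *v s)) + t\<^sup>2 * (w \<bullet> (G *v w))"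
  by (simp add: matrix_vector_right_distrib matrix_vector_mult_scaleR inner_add_left inner_add_right
      algebra_simps power2_eq_square)

lemma cubic_model_add_scaleR:
  fixes G :: "real^'m^'m"
  shows "cubic_model g G \<eta> (s + t *\<^sub>R w) =
     g \<bullet> s + t * (g \<bullet> w) + 1/2 * (s \<bullet> (G *v s) + t * (s \<bullet> (G *v w) + w \<bullet> (G *v s)) + t\<^sup>2 * (w \<bullet> (G *v w)))
     + 1 / (6 * \<eta>) * norm (s + t *\<^sub>R w) ^ 3"
  unfolding cubic_model_def quadratic_form_add_scaleR by (simp add: inner_add_right)

lemma has_real_derivative_norm_cube_line:
  fixes s w :: "'a::real_inner"
  assumes "s \<noteq> 0"
  shows "((\<lambda>t. norm (s + t *\<^sub>R w) ^ 3) has_real_derivative (3 * norm s * (s \<bullet> w))) (at 0)"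
proof -
  have line: "((\<lambda>t. s + t *\<^sub>R w) has_derivative (\<lambda>h. h *\<^sub>R w)) (at 0)"
    by (auto intro!: derivative_eq_intros)
  have "(norm has_derivative (\<lambda>h. h \<bullet> sgn s)) (at (s + 0 *\<^sub>R w))"
    using has_derivative_norm[OF assms] by simp
  from has_derivative_compose[OF line this]
  have "((\<lambda>t. norm (s + t *\<^sub>R w)) has_derivative (\<lambda>h. (h *\<^sub>R w) \<bullet> sgn s)) (at 0)"
    by (simp add: o_def)
  then have "((\<lambda>t. norm (s + t *\<^sub>R w)) has_real_derivative (sgn s \<bullet> w)) (at 0)"
    by (simp add: has_field_derivative_def inner_commute mult.commute[of _ "w \<bullet> sgn s"])
  from DERIV_power[OF this, of 3] show ?thesis
    using assms by (simp add: sgn_div_norm power2_eq_square field_simps)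
qed

text \<open>\<open>G\<close> need not be symmetric, so only its symmetric part enters.\<close>

lemma cubic_min_first_order:
  fixes G :: "real^'m^'m"
  assumes min: "is_cubic_min g G \<eta> s" and eta: "\<eta> > 0"
  shows "g \<bullet> w + (s \<bullet> (G *v w) + w \<bullet> (G *v s)) / 2 + norm s / (2 * \<eta>) * (s \<bullet> w) = 0"
proof (cases "s = 0")
  case False
  have "((\<lambda>t. cubic_model g G \<eta> (s + t *\<^sub>R w)) has_real_derivative
      (g \<bullet> w + 1/2 * (s \<bullet> (G *v w) + w \<bullet> (G *v s)) + 1 / (6 * \<eta>) * (3 * norm s * (s \<bullet> w)))) (at 0)"
    unfolding cubic_model_add_scaleR
    by (rule derivative_eq_intros has_real_derivative_norm_cube_line[OF False] refl | simp)+
  from DERIV_local_min[OF this zero_less_one] min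
  show ?thesis using eta by (simp add: is_cubic_min_def field_simps)
next
  case True
  have "0 \<le> g \<bullet> u" for u
  proof (rule nonneg_if_nonneg_perturbation[of _ "\<bar>u \<bullet> (G *v u)\<bar> + norm u ^ 3 / (6*\<eta>)"])
    fix t :: real assume t: "0 < t" "t < 1"
    have "cubic_model g G \<eta> s \<le> cubic_model g G \<eta> (t *\<^sub>R u)"
      using min by (simp add: is_cubic_min_def)
    then have "0 \<le> t * (g \<bullet> u + t * (u \<bullet> (G *v u) / 2) + t\<^sup>2 * (norm u ^ 3 / (6*\<eta>)))"
      using True t by (simp add: cubic_model_def matrix_vector_mult_scaleR power_mult_distrib
          power2_eq_square power3_eq_cube algebra_simps)
    then have "0 \<le> g \<bullet> u + t * (u \<bullet> (G *v u) / 2) + t\<^sup>2 * (norm u ^ 3 / (6*\<eta>))"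
      using t by (simp add: zero_le_mult_iff)
    moreover have "t * (u \<bullet> (G *v u) / 2) \<le> t * \<bar>u \<bullet> (G *v u)\<bar>"
      using t by (intro mult_left_mono) auto
    moreover have "t\<^sup>2 * (norm u ^ 3 / (6*\<eta>)) \<le> t * (norm u ^ 3 / (6*\<eta>))"
      using t eta by (intro mult_right_mono) (auto simp: power2_eq_square)
    ultimately show "0 \<le> g \<bullet> u + (\<bar>u \<bullet> (G *v u)\<bar> + norm u ^ 3 / (6*\<eta>)) * t"
      by (simp add: algebra_simps)
  qed
  from this[of w] this[of "-w"] True show ?thesis by simp
qed

text \<open>Moving from \<open>s\<close> along the chord \<open>d\<close> with \<open>\<parallel>s + d\<parallel> = \<parallel>s\<parallel>\<close> leaves the cubic term unchanged,
  so minimality of \<open>s\<close> and the first-order condition give curvature \<open>\<ge> -\<parallel>s\<parallel> / (2\<eta>)\<close> in every direction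
  not orthogonal to \<open>s\<close>.\<close>

lemma cubic_min_second_order_transversal:
  fixes G :: "real^'m^'m"
  assumes min: "is_cubic_min g G \<eta> s" and eta: "\<eta> > 0" and us: "u \<bullet> s \<noteq> 0"
  shows "0 \<le> u \<bullet> (G *v u) + norm s / (2 * \<eta>) * (norm u)\<^sup>2"
proof -
  define \<sigma> where "\<sigma> = norm s / (2 * \<eta>)"
  have nu: "(norm u)\<^sup>2 > 0" using us by auto
  define \<tau> where "\<tau> = -2 * (s \<bullet> u) / (norm u)\<^sup>2"
  have tau0: "\<tau> \<noteq> 0" using us nu by (simp add: \<tau>_def inner_commute)
  define d where "d = \<tau> *\<^sub>R u"
  have sd: "2 * (s \<bullet> d) + (norm d)\<^sup>2 = 0"
    using nu by (simp add: d_def \<tau>_def power_mult_distrib power2_eq_square field_simps)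
  have "(norm (s + 1 *\<^sub>R d))\<^sup>2 = (norm s)\<^sup>2"
    using power2_norm_add_scaleR[of s 1 d] sd by simp
  then have chord: "norm (s + 1 *\<^sub>R d) = norm s"
    by (simp add: power2_eq_iff_nonneg)
  have "cubic_model g G \<eta> s \<le> cubic_model g G \<eta> (s + 1 *\<^sub>R d)"
    using min by (simp add: is_cubic_min_def)
  then have "0 \<le> g \<bullet> d + 1/2 * (s \<bullet> (G *v d) + d \<bullet> (G *v s)) + 1/2 * (d \<bullet> (G *v d))"
    unfolding cubic_model_add_scaleR[of g G \<eta> s 1 d] chord by (simp add: cubic_model_def algebra_simps)
  also have "g \<bullet> d + 1/2 * (s \<bullet> (G *v d) + d \<bullet> (G *v s)) = - \<sigma> * (s \<bullet> d)"
    using cubic_min_first_order[OF min eta, of d] by (simp add: \<sigma>_def)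
  also have "s \<bullet> d = -((norm d)\<^sup>2 / 2)" using sd by simp
  finally have "0 \<le> d \<bullet> (G *v d) + \<sigma> * (norm d)\<^sup>2" by simp
  also have "d \<bullet> (G *v d) + \<sigma> * (norm d)\<^sup>2 = \<tau>\<^sup>2 * (u \<bullet> (G *v u) + \<sigma> * (norm u)\<^sup>2)"
    by (simp add: d_def matrix_vector_mult_scaleR power_mult_distrib power2_eq_square algebra_simps)
  finally show ?thesis using tau0 by (simp add: zero_le_mult_iff \<sigma>_def)
qed

lemma cubic_min_at_zero_psd:
  fixes G :: "real^'m^'m"
  assumes min: "is_cubic_min g G \<eta> 0" and eta: "\<eta> > 0"
  shows "0 \<le> v \<bullet> (G *v v)"
proof -
  have "g \<bullet> g = 0" using cubic_min_first_order[OF min eta, of g] by simp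
  then have g0: "g = 0" by simp
  show ?thesis
  proof (rule nonneg_if_nonneg_perturbation[of _ "norm v ^ 3 / (3 * \<eta>)"])
    fix t :: real assume t: "0 < t" "t < 1"
    have "cubic_model g G \<eta> 0 \<le> cubic_model g G \<eta> (t *\<^sub>R v)"
      using min by (simp add: is_cubic_min_def)
    then have "0 \<le> t\<^sup>2 / 2 * (v \<bullet> (G *v v) + norm v ^ 3 / (3 * \<eta>) * t)"
      using g0 t by (simp add: cubic_model_def matrix_vector_mult_scaleR power_mult_distrib
          power2_eq_square power3_eq_cube algebra_simps)
    then show "0 \<le> v \<bullet> (G *v v) + norm v ^ 3 / (3 * \<eta>) * t"
      using t by (simp add: zero_le_mult_iff)
  qed
qed

lemma cubic_min_second_order:
  fixes G :: "real^'m^'m"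
  assumes min: "is_cubic_min g G \<eta> s" and eta: "\<eta> > 0"
  shows "0 \<le> v \<bullet> (G *v v) + norm s / (2 * \<eta>) * (norm v)\<^sup>2"
proof (cases "s = 0")
  case True
  then show ?thesis using cubic_min_at_zero_psd min eta by simp
next
  case False
  show ?thesis
  proof (cases "v \<bullet> s = 0")
    case False
    then show ?thesis by (rule cubic_min_second_order_transversal[OF min eta])
  next
    case vs: True
    define \<sigma> where "\<sigma> = norm s / (2 * \<eta>)"
    define B where "B = v \<bullet> (G *v s) + s \<bullet> (G *v v) + 2 * \<sigma> * (v \<bullet> s)"
    define Q where "Q = s \<bullet> (G *v s) + \<sigma> * (norm s)\<^sup>2"
    have "0 \<le> v \<bullet> (G *v v) + \<sigma> * (norm v)\<^sup>2"
    proof (rule nonneg_if_nonneg_perturbation[of _ "\<bar>B\<bar> + \<bar>Q\<bar>"])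
      fix t :: real assume t: "0 < t" "t < 1"
      have "(v + t *\<^sub>R s) \<bullet> s = t * (norm s)\<^sup>2"
        using vs by (simp add: inner_add_left power2_norm_eq_inner)
      then have "(v + t *\<^sub>R s) \<bullet> s \<noteq> 0" using t False by simp
      from cubic_min_second_order_transversal[OF min eta this]
      have "0 \<le> v \<bullet> (G *v v) + \<sigma> * (norm v)\<^sup>2 + t * B + t\<^sup>2 * Q"
        unfolding quadratic_form_add_scaleR power2_norm_add_scaleR B_def Q_def \<sigma>_def
        by (simp add: algebra_simps)
      moreover have "t * B \<le> t * \<bar>B\<bar>" using t by (intro mult_left_mono) auto
      moreover have "t\<^sup>2 * Q \<le> t\<^sup>2 * \<bar>Q\<bar>" by (intro mult_left_mono) auto
      moreover have "t\<^sup>2 * \<bar>Q\<bar> \<le> t * \<bar>Q\<bar>" using t by (intro mult_right_mono) (auto simp: power2_eq_square)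
      ultimately show "0 \<le> v \<bullet> (G *v v) + \<sigma> * (norm v)\<^sup>2 + (\<bar>B\<bar> + \<bar>Q\<bar>) * t"
        by (simp add: algebra_simps)
    qed
    then show ?thesis by (simp add: \<sigma>_def)
  qed
qed

lemma cubic_min_model_decrease:
  fixes G :: "real^'m^'m"
  assumes min: "is_cubic_min g G \<eta> s" and eta: "\<eta> > 0"
  shows "g \<bullet> s + 1/2 * (s \<bullet> (G *v s)) \<le> - (norm s ^ 3 / (4 * \<eta>))"
proof -
  have "g \<bullet> s + s \<bullet> (G *v s) + norm s ^ 3 / (2 * \<eta>) = 0"
    using cubic_min_first_order[OF min eta, of s]
    by (simp add: power2_norm_eq_inner[symmetric] power2_eq_square power3_eq_cube)
  moreover have "0 \<le> s \<bullet> (G *v s) + norm s ^ 3 / (2 * \<eta>)"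
    using cubic_min_second_order[OF min eta, of s] by (simp add: power2_eq_square power3_eq_cube)
  ultimately show ?thesis using eta by (simp add: field_simps)
qed

lemma cubic_step_descent:
  fixes G H :: "real^'m^'m"
  assumes min: "is_cubic_min g G \<eta> s" and eta: "\<eta> > 0"
    and upper: "F' \<le> F + gr \<bullet> s + 1/2 * (s \<bullet> (H *v s)) + L/6 * norm s ^ 3"
    and err_g: "norm (gr - g) \<le> \<beta> * (a\<^sup>2 + \<epsilon>\<^sup>2)"
    and err_H: "mnorm (H - G) \<le> \<alpha> * (a + \<epsilon>)"
    and a: "a \<ge> 0" and \<epsilon>: "\<epsilon> \<ge> 0" and \<alpha>: "\<alpha> \<ge> 0" and \<beta>: "\<beta> \<ge> 0"
  shows "F' + (1/(4*\<eta>) - L/6 - 2*\<beta>/3 - 2*\<alpha>/3) * norm s ^ 3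
          \<le> F + (2*\<beta>/3 + \<alpha>/6) * a ^ 3 + (2*\<beta>/3 + \<alpha>/6) * \<epsilon> ^ 3"
proof -
  define r where "r = norm s"
  have r: "r \<ge> 0" by (simp add: r_def)
  have model_decrease: "g \<bullet> s + 1/2 * (s \<bullet> (G *v s)) \<le> - (r ^ 3 / (4 * \<eta>))"
    using cubic_min_model_decrease[OF min eta] by (simp add: r_def)
  have "(gr - g) \<bullet> s \<le> \<beta> * (a\<^sup>2 + \<epsilon>\<^sup>2) * r"
    using norm_cauchy_schwarz[of "gr - g" s] err_g mult_right_mono[OF err_g r] by (simp add: r_def)
  moreover have "s \<bullet> ((H - G) *v s) \<le> \<alpha> * (a + \<epsilon>) * r\<^sup>2"
    using abs_inner_matrix_le_mnorm[of s "H - G" s] mult_right_mono[OF err_H, of "r\<^sup>2"]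
    by (simp add: r_def power2_eq_square mult.assoc)
  ultimately have "F' \<le> F - r ^ 3 / (4 * \<eta>) + \<beta> * (a\<^sup>2 * r) + \<beta> * (\<epsilon>\<^sup>2 * r)
      + \<alpha>/2 * (a * r\<^sup>2) + \<alpha>/2 * (\<epsilon> * r\<^sup>2) + L/6 * r ^ 3"
    using upper model_decrease
    by (simp add: r_def inner_diff_left matrix_vector_mult_diff_rdistrib inner_diff_right algebra_simps)
  moreover have "\<beta> * (a\<^sup>2 * r) \<le> 2*\<beta>/3 * a ^ 3 + \<beta>/3 * r ^ 3"
    using mult_left_mono[OF young_cube[OF a r] \<beta>] by (simp add: field_simps)
  moreover have "\<beta> * (\<epsilon>\<^sup>2 * r) \<le> 2*\<beta>/3 * \<epsilon> ^ 3 + \<beta>/3 * r ^ 3"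
    using mult_left_mono[OF young_cube[OF \<epsilon> r] \<beta>] by (simp add: field_simps)
  moreover have "\<alpha>/2 * (a * r\<^sup>2) \<le> \<alpha>/6 * a ^ 3 + \<alpha>/3 * r ^ 3"
    using mult_left_mono[OF young_cube[OF r a], of "\<alpha>/2"] \<alpha> by (simp add: field_simps)
  moreover have "\<alpha>/2 * (\<epsilon> * r\<^sup>2) \<le> \<alpha>/6 * \<epsilon> ^ 3 + \<alpha>/3 * r ^ 3"
    using mult_left_mono[OF young_cube[OF r \<epsilon>], of "\<alpha>/2"] \<alpha> by (simp add: field_simps)
  moreover have "(1/(4*\<eta>) - L/6 - 2*\<beta>/3 - 2*\<alpha>/3) * r ^ 3
      = r ^ 3 / (4 * \<eta>) - L/6 * r ^ 3 - 2*\<beta>/3 * r ^ 3 - 2*\<alpha>/3 * r ^ 3"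
    by (simp add: field_simps)
  ultimately show ?thesis
    unfolding r_def[symmetric] by (simp add: distrib_right)
qed

text \<open>Testing the first-order condition of the model against \<open>gr'\<close> itself bounds \<open>\<parallel>gr'\<parallel>\<^sup>2\<close>
  by \<open>\<parallel>gr'\<parallel>\<close> times the right-hand side; symmetry of \<open>H\<close> is needed because the condition only sees
  the symmetric part of \<open>G\<close>.\<close>

lemma cubic_step_gradient_le:
  fixes G H :: "real^'m^'m"
  assumes min: "is_cubic_min g G \<eta> s" and eta: "\<eta> > 0"
    and taylor: "norm (gr' - gr - H *v s) \<le> L/2 * (norm s)\<^sup>2"
    and sym: "\<And>u v. u \<bullet> (H *v v) = v \<bullet> (H *v u)"
    and err_g: "norm (gr - g) \<le> e_g" and err_H: "mnorm (H - G) \<le> e_H"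
  shows "norm gr' \<le> L/2 * (norm s)\<^sup>2 + e_g + e_H * norm s + (norm s)\<^sup>2 / (2 * \<eta>)"
proof -
  define r where "r = norm s"
  define u where "u = gr'"
  define \<sigma> where "\<sigma> = r / (2 * \<eta>)"
  define C where "C = L/2 * r\<^sup>2 + e_g + e_H * r + \<sigma> * r"
  have \<sigma>: "\<sigma> \<ge> 0" and r: "r \<ge> 0" using eta by (simp_all add: \<sigma>_def r_def)
  have "u \<bullet> u = u \<bullet> (gr' - gr - H *v s) + u \<bullet> (gr - g) + (u \<bullet> (H *v s) + g \<bullet> u)"
    by (simp add: u_def inner_diff_right inner_commute)
  also have "u \<bullet> (H *v s) + g \<bullet> u
      = 1/2 * (u \<bullet> ((H - G) *v s)) + 1/2 * (s \<bullet> ((H - G) *v u)) - \<sigma> * (s \<bullet> u)"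
  proof -
    have "g \<bullet> u = - ((s \<bullet> (G *v u) + u \<bullet> (G *v s)) / 2) - \<sigma> * (s \<bullet> u)"
      using cubic_min_first_order[OF min eta, of u] by (simp add: \<sigma>_def r_def)
    then show ?thesis
      using sym[of u s] by (simp add: matrix_vector_mult_diff_rdistrib inner_diff_right field_simps)
  qed
  finally have split: "u \<bullet> u = u \<bullet> (gr' - gr - H *v s) + u \<bullet> (gr - g)
      + (1/2 * (u \<bullet> ((H - G) *v s)) + 1/2 * (s \<bullet> ((H - G) *v u)) - \<sigma> * (s \<bullet> u))" .
  have "u \<bullet> (gr' - gr - H *v s) \<le> norm u * (L/2 * r\<^sup>2)"
    unfolding r_def by (rule order_trans[OF norm_cauchy_schwarz mult_left_mono[OF taylor]]) simp
  moreover have "u \<bullet> (gr - g) \<le> norm u * e_g"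
    by (rule order_trans[OF norm_cauchy_schwarz mult_left_mono[OF err_g]]) simp
  moreover have "u \<bullet> ((H - G) *v s) \<le> norm u * (e_H * r)"
    and "s \<bullet> ((H - G) *v u) \<le> norm u * (e_H * r)"
    using abs_inner_matrix_le_mnorm[of u "H - G" s] abs_inner_matrix_le_mnorm[of s "H - G" u]
      mult_right_mono[OF err_H, of "norm u * r"] r
    by (simp_all add: r_def abs_le_iff algebra_simps)
  moreover have "- (\<sigma> * (s \<bullet> u)) \<le> norm u * (\<sigma> * r)"
    using mult_left_mono[OF order_trans[OF abs_ge_minus_self Cauchy_Schwarz_ineq2[of s u]] \<sigma>]
    by (simp add: r_def algebra_simps)
  ultimately have "norm u * norm u \<le> norm u * C"
    using split unfolding C_def distrib_left power2_norm_eq_inner[symmetric] power2_eq_square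
    by linarith
  moreover have "C \<ge> 0"
  proof -
    have "0 \<le> L/2 * r\<^sup>2" "0 \<le> e_g" "0 \<le> e_H"
      using order_trans[OF norm_ge_zero taylor] order_trans[OF norm_ge_zero err_g]
        order_trans[OF mnorm_nonneg err_H] by (simp_all add: r_def)
    then show ?thesis unfolding C_def using \<sigma> r by simp
  qed
  ultimately have "norm u \<le> C"
    by (cases "norm u = 0") auto
  then show ?thesis by (simp add: C_def u_def r_def \<sigma>_def power2_eq_square)
qed

lemma cubic_step_gradient_bound:
  fixes G H :: "real^'m^'m"
  assumes min: "is_cubic_min g G \<eta> s" and eta: "\<eta> > 0"
    and taylor: "norm (gr' - gr - H *v s) \<le> L/2 * (norm s)\<^sup>2"
    and sym: "\<And>u v. u \<bullet> (H *v v) = v \<bullet> (H *v u)"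
    and err_g: "norm (gr - g) \<le> \<beta> * (a\<^sup>2 + \<epsilon>\<^sup>2)"
    and err_H: "mnorm (H - G) \<le> \<alpha> * (a + \<epsilon>)"
    and a: "0 \<le> a" "a \<le> \<epsilon>" and s: "norm s \<le> \<epsilon>"
    and \<alpha>: "\<alpha> \<ge> 0" and \<beta>: "\<beta> \<ge> 0" and L: "L \<ge> 0"
  shows "norm gr' \<le> (1 / (2 * \<eta>) + L + 2 * \<alpha> + 2 * \<beta>) * \<epsilon>\<^sup>2"
proof -
  have s2: "(norm s)\<^sup>2 \<le> \<epsilon>\<^sup>2" and "a\<^sup>2 \<le> \<epsilon>\<^sup>2" using s a by (auto intro: power_mono)
  then have "L/2 * (norm s)\<^sup>2 \<le> L/2 * \<epsilon>\<^sup>2" and "\<beta> * (a\<^sup>2 + \<epsilon>\<^sup>2) \<le> \<beta> * (2 * \<epsilon>\<^sup>2)"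
    using L \<beta> by (auto intro: mult_left_mono)
  moreover have "\<alpha> * (a + \<epsilon>) * norm s \<le> \<alpha> * (2 * \<epsilon>\<^sup>2)"
    using mult_mono[of "a + \<epsilon>" "2 * \<epsilon>" "norm s" \<epsilon>] a s \<alpha>
    by (simp add: power2_eq_square mult.assoc mult_left_mono)
  moreover have "(norm s)\<^sup>2 / (2 * \<eta>) \<le> \<epsilon>\<^sup>2 / (2 * \<eta>)"
    using s2 eta by (simp add: divide_right_mono)
  moreover have "L/2 * \<epsilon>\<^sup>2 \<le> L * \<epsilon>\<^sup>2" using L by simp
  moreover have "(1 / (2 * \<eta>) + L + 2 * \<alpha> + 2 * \<beta>) * \<epsilon>\<^sup>2
      = \<epsilon>\<^sup>2 / (2 * \<eta>) + L * \<epsilon>\<^sup>2 + \<alpha> * (2 * \<epsilon>\<^sup>2) + \<beta> * (2 * \<epsilon>\<^sup>2)"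
    by (simp add: field_simps)
  ultimately show ?thesis
    using cubic_step_gradient_le[OF min eta taylor sym err_g err_H] by linarith
qed

lemma cubic_step_hessian_lower_bound:
  fixes G H H' :: "real^'m^'m"
  assumes min: "is_cubic_min g G \<eta> s" and eta: "\<eta> > 0"
    and lip: "norm ((H' - H) *v v) \<le> L * norm s * norm v"
    and err_H: "mnorm (H - G) \<le> \<alpha> * (a + \<epsilon>)"
    and a: "a \<le> \<epsilon>" and s: "norm s \<le> \<epsilon>" and \<alpha>: "\<alpha> \<ge> 0" and L: "L \<ge> 0"
  shows "- ((1 / (2 * \<eta>) + L + 2 * \<alpha>) * \<epsilon>) * (norm v)\<^sup>2 \<le> v \<bullet> (H' *v v)"
proof -
  have "v \<bullet> (H' *v v) = v \<bullet> ((H' - H) *v v) + v \<bullet> ((H - G) *v v) + v \<bullet> (G *v v)"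
    by (simp add: matrix_vector_mult_diff_rdistrib inner_diff_right)
  moreover have "\<bar>v \<bullet> ((H' - H) *v v)\<bar> \<le> L * \<epsilon> * (norm v)\<^sup>2"
  proof -
    have "\<bar>v \<bullet> ((H' - H) *v v)\<bar> \<le> norm v * (L * norm s * norm v)"
      by (rule order_trans[OF Cauchy_Schwarz_ineq2 mult_left_mono[OF lip]]) simp
    also have "\<dots> \<le> norm v * (L * \<epsilon> * norm v)"
      using s L by (intro mult_left_mono mult_right_mono) auto
    finally show ?thesis by (simp add: power2_eq_square algebra_simps)
  qed
  moreover have "\<bar>v \<bullet> ((H - G) *v v)\<bar> \<le> \<alpha> * (2 * \<epsilon>) * (norm v)\<^sup>2"
  proof -
    have "mnorm (H - G) \<le> \<alpha> * (2 * \<epsilon>)"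
      using err_H mult_left_mono[of "a + \<epsilon>" "2 * \<epsilon>" \<alpha>] a \<alpha> by linarith
    then show ?thesis
      using abs_inner_matrix_le_mnorm[of v "H - G" v] mult_right_mono[of _ _ "(norm v)\<^sup>2"]
      by (fastforce simp: power2_eq_square mult.assoc)
  qed
  moreover have "norm s / (2 * \<eta>) * (norm v)\<^sup>2 \<le> \<epsilon> / (2 * \<eta>) * (norm v)\<^sup>2"
    using s eta by (intro mult_right_mono divide_right_mono) auto
  moreover note cubic_min_second_order[OF min eta, of v]
  ultimately show ?thesis
    by (simp add: field_simps abs_le_iff)
qed

text \<open>With \<open>V t = P t + d * r t ^ 3\<close>, every step lowers \<open>V\<close> by at least \<open>(c - d) * r (t + 1) ^ 3 - d * e ^ 3\<close>.
  Before stopping, of any two consecutive steps at least one is longer than \<open>e\<close>, so on average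
  each step gains \<open>B * e ^ 3\<close>; the indicator term in the invariant carries the gain of a long step
  over to the next one.\<close>

context
  fixes P r :: "nat \<Rightarrow> real" and B c d e :: real and K :: nat
  assumes d: "d \<ge> 0" and B: "B \<ge> 0" and c: "c \<ge> 2 * B + 3 * d" and e: "e > 0"
    and r0: "r 0 = e" and r_nonneg: "\<And>t. r t \<ge> 0"
    and step: "\<And>t. t < K \<Longrightarrow> P (Suc t) + c * r (Suc t) ^ 3 \<le> P t + d * r t ^ 3 + d * e ^ 3"
    and long: "\<And>t. 1 \<le> t \<Longrightarrow> t < K \<Longrightarrow> e < max (r (t - 1)) (r t)"
begin

lemma potential_descent_invariant:
  "k < K \<Longrightarrow> P k + d * r k ^ 3
     \<le> P 0 + d * e ^ 3 - B * real k * e ^ 3 - (if e < r k then (B + d) * e ^ 3 else 0)"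
proof (induction k)
  case 0
  then show ?case using r0 by simp
next
  case (Suc k)
  then have IH: "P k + d * r k ^ 3
      \<le> P 0 + d * e ^ 3 - B * real k * e ^ 3 - (if e < r k then (B + d) * e ^ 3 else 0)"
    by simp
  have "P (Suc k) + d * r (Suc k) ^ 3 \<le> P k + d * r k ^ 3 + d * e ^ 3 - (c - d) * r (Suc k) ^ 3"
    using step[of k] Suc.prems by (simp add: algebra_simps)
  moreover have "(B + d) * e ^ 3 \<ge> 0" using B d e by simp
  moreover have "d * r (Suc k) ^ 3 \<le> c * r (Suc k) ^ 3"
    using B d c r_nonneg by (intro mult_right_mono) auto
  moreover have "(2 * B + 2 * d) * e ^ 3 \<le> (c - d) * r (Suc k) ^ 3" if "e < r (Suc k)"
  proof -
    have "(2 * B + 2 * d) * e ^ 3 \<le> (c - d) * e ^ 3" using c e by (intro mult_right_mono) auto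
    also have "\<dots> \<le> (c - d) * r (Suc k) ^ 3"
      using that e c B d by (intro mult_left_mono power_mono) auto
    finally show ?thesis .
  qed
  moreover have "e < r k" if "\<not> e < r (Suc k)" using long[of "Suc k"] Suc.prems that by simp
  ultimately show ?case
    using IH r_nonneg[of "Suc k"] by (auto simp: algebra_simps split: if_splits)
qed

lemma potential_descent_count:
  assumes K: "K \<ge> 1"
  shows "B * real K * e ^ 3 \<le> P 0 - P K + (B + 2 * d) * e ^ 3"
proof -
  have "P (K - 1) + d * r (K - 1) ^ 3 \<le> P 0 + d * e ^ 3 - B * real (K - 1) * e ^ 3"
  proof -
    have "(B + d) * e ^ 3 \<ge> 0" using B d e by simp
    then show ?thesis using potential_descent_invariant[of "K - 1"] K by (simp split: if_splits)
  qed
  moreover have "P K + c * r K ^ 3 \<le> P (K - 1) + d * r (K - 1) ^ 3 + d * e ^ 3"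
    using step[of "K - 1"] K by simp
  moreover have "0 \<le> c * r K ^ 3" using c B d r_nonneg by simp
  ultimately show ?thesis
    using K by (simp add: of_nat_diff algebra_simps)
qed

end

lemma stop_time_cases:
  fixes s :: "nat \<Rightarrow> real^'m"
  obtains
    (never) "stop_time s \<epsilon> = \<infinity>" and "\<And>t. 1 \<le> t \<Longrightarrow> \<epsilon> < max (norm (s (t - 1))) (norm (s t))"
  | (at) k where "stop_time s \<epsilon> = enat k" and "1 \<le> k" and "norm (s (k - 1)) \<le> \<epsilon>" and "norm (s k) \<le> \<epsilon>"
      and "\<And>t. 1 \<le> t \<Longrightarrow> t < k \<Longrightarrow> \<epsilon> < max (norm (s (t - 1))) (norm (s t))"
proof (cases "\<exists>t\<ge>1. max (norm (s (t - 1))) (norm (s t)) \<le> \<epsilon>")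
  case False
  then have "stop_time s \<epsilon> = \<infinity>" by (simp add: stop_time_def)
  moreover have "\<epsilon> < max (norm (s (t - 1))) (norm (s t))" if "1 \<le> t" for t
  proof -
    have "\<not> max (norm (s (t - 1))) (norm (s t)) \<le> \<epsilon>" using False that by blast
    then show ?thesis by (auto simp: less_max_iff_disj)
  qed
  ultimately show ?thesis by (rule never)
next
  case True
  define k where "k = (LEAST t. 1 \<le> t \<and> max (norm (s (t - 1))) (norm (s t)) \<le> \<epsilon>)"
  have "1 \<le> k \<and> max (norm (s (k - 1))) (norm (s k)) \<le> \<epsilon>"
    unfolding k_def using True by (metis (mono_tags, lifting) LeastI)
  moreover have "\<epsilon> < max (norm (s (t - 1))) (norm (s t))" if "1 \<le> t" "t < k" for t
    using not_less_Least[OF that(2)[unfolded k_def]] that(1) by auto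
  ultimately show ?thesis
    using at[of k] True by (auto simp: stop_time_def k_def)
qed
section \<open>Functions with Lipschitz continuous Hessian\<close>

locale lipschitz_hessian =
  fixes F :: "real^'m \<Rightarrow> real" and grad :: "real^'m \<Rightarrow> real^'m" and Hess :: "real^'m \<Rightarrow> real^'m^'m"
    and L :: real
  assumes has_derivative_F: "\<And>x. (F has_derivative (\<lambda>h. grad x \<bullet> h)) (at x)"
    and has_derivative_grad: "\<And>x. (grad has_derivative (\<lambda>h. Hess x *v h)) (at x)"
    and Hess_lipschitz: "\<And>x x' v. norm ((Hess x' - Hess x) *v v) \<le> L * norm (x' - x) * norm v"
    and L_nonneg: "L \<ge> 0"
begin

lemma F_line_derivative:
  "((\<lambda>t. F (x + t *\<^sub>R s)) has_real_derivative (grad (x + t *\<^sub>R s) \<bullet> s)) (at t)"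
  by (rule has_real_derivative_along_line[OF has_derivative_F])

lemma grad_line_derivative:
  "((\<lambda>t. u \<bullet> grad (x + t *\<^sub>R s)) has_real_derivative (u \<bullet> (Hess (x + t *\<^sub>R s) *v s))) (at t)"
  by (rule has_real_derivative_along_line[OF has_derivative_inner_right[OF has_derivative_grad]])

lemma inner_Hess_increment_le:
  assumes "t \<ge> 0"
  shows "u \<bullet> ((Hess (x + t *\<^sub>R s) - Hess x) *v s) \<le> L * t * norm s * norm s * norm u"
proof -
  have "u \<bullet> ((Hess (x + t *\<^sub>R s) - Hess x) *v s) \<le> norm u * norm ((Hess (x + t *\<^sub>R s) - Hess x) *v s)"
    by (rule norm_cauchy_schwarz)
  also have "\<dots> \<le> norm u * (L * norm (t *\<^sub>R s) * norm s)"
    using Hess_lipschitz[of "x + t *\<^sub>R s" x s] by (intro mult_left_mono) auto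
  finally show ?thesis using assms by (simp add: algebra_simps)
qed

text \<open>Both Taylor bounds integrate \<open>inner_Hess_increment_le\<close> along the segment from \<open>x\<close> to
  \<open>x + s\<close>: the remainder terms are antitone on \<open>[0, 1]\<close>.\<close>

lemma cubic_upper_bound:
  "F (x + s) \<le> F x + grad x \<bullet> s + 1/2 * (s \<bullet> (Hess x *v s)) + L/6 * norm s ^ 3"
proof -
  define q where "q = s \<bullet> (Hess x *v s)"
  define K where "K = L * norm s ^ 3"
  define \<rho> where "\<rho> t = s \<bullet> grad (x + t *\<^sub>R s) - s \<bullet> grad x - t * q - K * t\<^sup>2 / 2" for t
  define \<psi> where "\<psi> t = F (x + t *\<^sub>R s) - F x - t * (grad x \<bullet> s) - t\<^sup>2 / 2 * q - K * t ^ 3 / 6" for t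
  have d\<rho>: "(\<rho> has_real_derivative (s \<bullet> (Hess (x + t *\<^sub>R s) *v s) - q - K * t)) (at t)" for t
    unfolding \<rho>_def
    by (rule derivative_eq_intros grad_line_derivative refl | simp)+
  have d\<psi>: "(\<psi> has_real_derivative \<rho> t) (at t)" for t
    unfolding \<psi>_def \<rho>_def
    by (rule derivative_eq_intros F_line_derivative refl | simp add: inner_commute algebra_simps)+
  have "\<rho> t \<le> \<rho> 0" if "t \<ge> 0" for t
  proof (rule deriv_nonpos_imp_antimono[OF d\<rho>])
    fix y assume "y \<in> {0..t}"
    then show "s \<bullet> (Hess (x + y *\<^sub>R s) *v s) - q - K * y \<le> 0"
      using inner_Hess_increment_le[of y s x s]
      by (simp add: q_def K_def matrix_vector_mult_diff_rdistrib inner_diff_right power3_eq_cube algebra_simps)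
  qed (use that in auto)
  then have "\<psi> 1 \<le> \<psi> 0"
    by (intro deriv_nonpos_imp_antimono[OF d\<psi>]) (auto simp: \<rho>_def)
  then show ?thesis by (simp add: \<psi>_def q_def K_def algebra_simps)
qed

lemma gradient_taylor_bound:
  "norm (grad (x + s) - grad x - Hess x *v s) \<le> L/2 * (norm s)\<^sup>2"
proof -
  define w where "w = grad (x + s) - grad x - Hess x *v s"
  define K where "K = L * (norm s)\<^sup>2 * norm w"
  define \<theta> where "\<theta> t = w \<bullet> grad (x + t *\<^sub>R s) - w \<bullet> grad x - t * (w \<bullet> (Hess x *v s)) - K * t\<^sup>2 / 2" for t
  have d\<theta>: "(\<theta> has_real_derivative (w \<bullet> (Hess (x + t *\<^sub>R s) *v s) - w \<bullet> (Hess x *v s) - K * t)) (at t)" for t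
    unfolding \<theta>_def by (rule derivative_eq_intros grad_line_derivative refl | simp)+
  have "\<theta> 1 \<le> \<theta> 0"
  proof (rule deriv_nonpos_imp_antimono[OF d\<theta>])
    fix y :: real assume "y \<in> {0..1}"
    then show "w \<bullet> (Hess (x + y *\<^sub>R s) *v s) - w \<bullet> (Hess x *v s) - K * y \<le> 0"
      using inner_Hess_increment_le[of y w x s]
      by (simp add: K_def matrix_vector_mult_diff_rdistrib inner_diff_right power2_eq_square algebra_simps)
  qed auto
  moreover have "\<theta> 1 = w \<bullet> (grad (x + s) - grad x - Hess x *v s) - K / 2"
    by (simp add: \<theta>_def inner_diff_right)
  then have "\<theta> 1 = w \<bullet> w - K / 2"
    unfolding w_def[symmetric] .
  moreover have "\<theta> 0 = 0" by (simp add: \<theta>_def)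
  ultimately have "norm w * norm w \<le> (L/2 * (norm s)\<^sup>2) * norm w"
    by (simp add: K_def power2_norm_eq_inner[symmetric] power2_eq_square)
  then show ?thesis
    using L_nonneg by (cases "norm w = 0") (auto simp: w_def)
qed

text \<open>The second difference \<open>F (x + hu + hv) - F (x + hv) - F (x + hu) + F x\<close> is symmetric in \<open>u\<close> and
  \<open>v\<close> and equals \<open>h\<^sup>2 v \<bullet> Hess x u + O(h\<^sup>3)\<close> by the mean value theorem; hence \<open>Hess x\<close> is symmetric.\<close>

lemma second_difference_approx:
  assumes h: "h > 0"
  shows "\<bar>(F (x + h *\<^sub>R u + h *\<^sub>R v) - F (x + h *\<^sub>R v) - F (x + h *\<^sub>R u) + F x)
           - h\<^sup>2 * (v \<bullet> (Hess x *v u))\<bar> \<le> h ^ 3 * (L * (norm u * (norm v)\<^sup>2 + (norm u)\<^sup>2 * norm v))"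
proof -
  define \<psi> where "\<psi> t = F (x + h *\<^sub>R u + t *\<^sub>R v) - F (x + t *\<^sub>R v)" for t
  define d\<psi> where "d\<psi> t = grad (x + h *\<^sub>R u + t *\<^sub>R v) \<bullet> v - grad (x + t *\<^sub>R v) \<bullet> v" for t
  have "(\<psi> has_real_derivative d\<psi> t) (at t)" for t
    unfolding \<psi>_def d\<psi>_def by (intro DERIV_diff F_line_derivative)
  from MVT2[OF h this] obtain \<xi> where \<xi>: "0 < \<xi>" "\<xi> < h" and mvt: "\<psi> h - \<psi> 0 = h * d\<psi> \<xi>"
    by auto
  define p where "p = x + \<xi> *\<^sub>R v"
  define w where "w = grad (p + h *\<^sub>R u) - grad p - Hess p *v (h *\<^sub>R u)"
  have p_shift: "x + h *\<^sub>R u + \<xi> *\<^sub>R v = p + h *\<^sub>R u" by (simp add: p_def algebra_simps)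
  have "d\<psi> \<xi> = h * (v \<bullet> (Hess x *v u)) + h * (v \<bullet> ((Hess p - Hess x) *v u)) + v \<bullet> w"
    unfolding d\<psi>_def p_shift w_def
    by (simp add: p_def[symmetric] inner_diff_left inner_diff_right inner_commute matrix_vector_mult_scaleR
        matrix_vector_mult_diff_rdistrib algebra_simps)
  then have eq: "(F (x + h *\<^sub>R u + h *\<^sub>R v) - F (x + h *\<^sub>R v) - F (x + h *\<^sub>R u) + F x)
           - h\<^sup>2 * (v \<bullet> (Hess x *v u)) = h * (h * (v \<bullet> ((Hess p - Hess x) *v u)) + v \<bullet> w)"
    using mvt by (simp add: \<psi>_def power2_eq_square algebra_simps)
  have "\<bar>v \<bullet> ((Hess p - Hess x) *v u)\<bar> \<le> norm v * (L * (\<xi> * norm v) * norm u)"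
    using order_trans[OF Cauchy_Schwarz_ineq2 mult_left_mono[OF Hess_lipschitz[of p x u]]] \<xi>
    by (simp add: p_def)
  also have "\<dots> \<le> norm v * (L * (h * norm v) * norm u)"
    using \<xi> L_nonneg by (intro mult_left_mono mult_right_mono) auto
  finally have "\<bar>v \<bullet> ((Hess p - Hess x) *v u)\<bar> \<le> h * (L * norm u * (norm v)\<^sup>2)"
    by (simp only: power2_eq_square ac_simps)
  from mult_left_mono[OF this, of h]
  have b1: "\<bar>h * (v \<bullet> ((Hess p - Hess x) *v u))\<bar> \<le> h\<^sup>2 * (L * norm u * (norm v)\<^sup>2)"
    using h by (simp only: abs_mult power2_eq_square abs_of_pos ac_simps less_imp_le)
  have "\<bar>v \<bullet> w\<bar> \<le> norm v * (L/2 * (norm (h *\<^sub>R u))\<^sup>2)"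
    unfolding w_def
    by (rule order_trans[OF Cauchy_Schwarz_ineq2 mult_left_mono[OF gradient_taylor_bound[of p]]]) simp
  also have "\<dots> \<le> h\<^sup>2 * (L * (norm u)\<^sup>2 * norm v)"
    using h L_nonneg by (simp add: power_mult_distrib algebra_simps)
  finally have "\<bar>h * (v \<bullet> ((Hess p - Hess x) *v u)) + v \<bullet> w\<bar>
      \<le> h\<^sup>2 * (L * (norm u * (norm v)\<^sup>2 + (norm u)\<^sup>2 * norm v))"
    using b1 abs_triangle_ineq[of "h * (v \<bullet> ((Hess p - Hess x) *v u))" "v \<bullet> w"]
    by (simp add: algebra_simps)
  then show ?thesis
    unfolding eq using h by (simp add: abs_mult power2_eq_square power3_eq_cube mult_left_mono mult.assoc)
qed

lemma Hess_symmetric: "u \<bullet> (Hess x *v v) = v \<bullet> (Hess x *v u)"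
proof -
  define K where "K = L * (norm u * (norm v)\<^sup>2 + (norm u)\<^sup>2 * norm v)"
  have "0 \<le> - \<bar>v \<bullet> (Hess x *v u) - u \<bullet> (Hess x *v v)\<bar> + 2 * K * h" if h: "0 < h" "h < 1" for h
  proof -
    have comm: "x + h *\<^sub>R v + h *\<^sub>R u = x + h *\<^sub>R u + h *\<^sub>R v" by (simp add: algebra_simps)
    have "\<bar>h\<^sup>2 * (v \<bullet> (Hess x *v u)) - h\<^sup>2 * (u \<bullet> (Hess x *v v))\<bar> \<le> h\<^sup>2 * (2 * K * h)"
      using second_difference_approx[OF h(1), of x u v] second_difference_approx[OF h(1), of x v u]
      unfolding comm K_def by (simp add: power2_eq_square power3_eq_cube algebra_simps)
    then show ?thesis
      using h by (simp add: right_diff_distrib[symmetric] abs_mult)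
  qed
  from nonneg_if_nonneg_perturbation[OF this] show ?thesis by simp
qed

end

section \<open>Complexity of inexact cubic-regularised Newton iterations\<close>

text \<open>The outer loop shared by Cubic-GDA and Stochastic Cubic-GDA: \<open>g t\<close> and \<open>G t\<close> are whatever
  estimates of the gradient and Hessian of \<open>\<Phi>\<close> at \<open>x t\<close> the inner loop produced, and
  \<open>norm (s 0) = \<epsilon>\<close> is the paper's convention \<open>\<parallel>s\<^sub>0\<parallel> = \<epsilon>'\<close>.\<close>

definition cubic_newton_iterates ::
  "(nat \<Rightarrow> real^'m) \<Rightarrow> (nat \<Rightarrow> real^'m^'m) \<Rightarrow> real \<Rightarrow> real \<Rightarrow> (nat \<Rightarrow> real^'m) \<Rightarrow> (nat \<Rightarrow> real^'m) \<Rightarrow> bool"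
where
  "cubic_newton_iterates g G \<eta> \<epsilon> x s \<longleftrightarrow>
     norm (s 0) = \<epsilon> \<and> (\<forall>t. is_cubic_min (g t) (G t) \<eta> (s (Suc t)) \<and> x (Suc t) = x t + s (Suc t))"

context lipschitz_hessian
begin

context
  fixes F_min \<alpha> \<beta> \<epsilon> \<eta> :: real and g x s :: "nat \<Rightarrow> real^'m" and G :: "nat \<Rightarrow> real^'m^'m"
  assumes low: "\<And>x. F_min \<le> F x"
    and \<alpha>: "\<alpha> > 0" and \<beta>: "\<beta> > 0" and \<epsilon>: "\<epsilon> > 0" and \<eta>: "\<eta> > 0"
    and \<eta>_le: "\<eta> \<le> 1 / (9 * L + 18 * \<alpha> + 28 * \<beta>)"
    and iter: "cubic_newton_iterates g G \<eta> \<epsilon> x s"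
    and err: "\<forall>t. enat t < stop_time s \<epsilon> \<longrightarrow>
        norm (grad (x t) - g t) \<le> \<beta> * (norm (s t) ^ 2 + \<epsilon> ^ 2) \<and>
        mnorm (Hess (x t) - G t) \<le> \<alpha> * (norm (s t) + \<epsilon>)"
begin

lemma cubic_newton_step: "is_cubic_min (g t) (G t) \<eta> (s (Suc t))" "x (Suc t) = x t + s (Suc t)"
  using iter by (auto simp: cubic_newton_iterates_def)

lemma steps_before_stop_le:
  assumes K: "K \<ge> 1" and before: "\<And>t. t < K \<Longrightarrow> enat t < stop_time s \<epsilon>"
    and long: "\<And>t. 1 \<le> t \<Longrightarrow> t < K \<Longrightarrow> \<epsilon> < max (norm (s (t - 1))) (norm (s t))"
  shows "real K \<le> (F (x 0) - F_min + (L + 3 * \<alpha> + 4 * \<beta>) * \<epsilon> ^ 3) / ((L + \<alpha> + \<beta>) * \<epsilon> ^ 3)"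
proof -
  define c where "c = 1/(4*\<eta>) - L/6 - 2*\<beta>/3 - 2*\<alpha>/3"
  define d where "d = 2*\<beta>/3 + \<alpha>/6"
  define B where "B = L + \<alpha> + \<beta>"
  have B: "B > 0" using L_nonneg \<alpha> \<beta> by (simp add: B_def)
  have c: "c \<ge> 2 * B + 3 * d"
  proof -
    define q where "q = 1 / \<eta>"
    have "9 * L + 18 * \<alpha> + 28 * \<beta> \<le> q"
      using \<eta>_le \<eta> L_nonneg \<alpha> \<beta> by (simp add: q_def le_divide_eq mult.commute)
    moreover have "c = q / 4 - L/6 - 2*\<beta>/3 - 2*\<alpha>/3" by (simp add: c_def q_def)
    moreover have "2 * B + 3 * d = 2 * L + 5/2 * \<alpha> + 4 * \<beta>" by (simp add: B_def d_def)
    ultimately show ?thesis using L_nonneg \<alpha> \<beta> by linarith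
  qed
  have "B * real K * \<epsilon> ^ 3 \<le> F (x 0) - F (x K) + (B + 2 * d) * \<epsilon> ^ 3"
  proof (rule potential_descent_count[where r = "\<lambda>t. norm (s t)" and c = c])
    fix t assume "t < K"
    with err before have "norm (grad (x t) - g t) \<le> \<beta> * ((norm (s t))\<^sup>2 + \<epsilon>\<^sup>2)"
      and "mnorm (Hess (x t) - G t) \<le> \<alpha> * (norm (s t) + \<epsilon>)" by auto
    from cubic_step_descent[OF cubic_newton_step(1) \<eta> cubic_upper_bound this] \<alpha> \<beta> \<epsilon>
    show "F (x (Suc t)) + c * norm (s (Suc t)) ^ 3 \<le> F (x t) + d * norm (s t) ^ 3 + d * \<epsilon> ^ 3"
      by (simp add: cubic_newton_step(2) c_def d_def)
  qed (use \<alpha> \<beta> B c \<epsilon> iter long K in \<open>auto simp: d_def cubic_newton_iterates_def\<close>)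
  moreover have "(B + 2 * d) * \<epsilon> ^ 3 \<le> (L + 3 * \<alpha> + 4 * \<beta>) * \<epsilon> ^ 3"
    using \<alpha> \<beta> \<epsilon> by (intro mult_right_mono) (auto simp: B_def d_def)
  ultimately have "B * real K * \<epsilon> ^ 3 \<le> F (x 0) - F_min + (L + 3 * \<alpha> + 4 * \<beta>) * \<epsilon> ^ 3"
    using low[of "x K"] by linarith
  then show ?thesis
    unfolding B_def[symmetric] using B \<epsilon> by (simp add: pos_le_divide_eq ac_simps)
qed

lemma stopping_point_bounds:
  assumes "stop_time s \<epsilon> = enat k" "1 \<le> k" "norm (s (k - 1)) \<le> \<epsilon>" "norm (s k) \<le> \<epsilon>"
  shows "norm (grad (x k)) \<le> (1 / (2 * \<eta>) + L + 2 * \<alpha> + 2 * \<beta>) * \<epsilon> ^ 2"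
    and "- ((1 / (2 * \<eta>) + L + 2 * \<alpha>) * \<epsilon>) * norm v ^ 2 \<le> v \<bullet> (Hess (x k) *v v)"
proof -
  obtain j where k: "k = Suc j" using assms(2) by (cases k) auto
  with assms err have err_g: "norm (grad (x j) - g j) \<le> \<beta> * ((norm (s j))\<^sup>2 + \<epsilon>\<^sup>2)"
    and err_H: "mnorm (Hess (x j) - G j) \<le> \<alpha> * (norm (s j) + \<epsilon>)" by auto
  note step = cubic_newton_step[of j]
  show "norm (grad (x k)) \<le> (1 / (2 * \<eta>) + L + 2 * \<alpha> + 2 * \<beta>) * \<epsilon> ^ 2"
    using cubic_step_gradient_bound[OF step(1) \<eta> gradient_taylor_bound Hess_symmetric err_g err_H]
      assms \<alpha> \<beta> L_nonneg by (simp add: k step(2))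
  show "- ((1 / (2 * \<eta>) + L + 2 * \<alpha>) * \<epsilon>) * norm v ^ 2 \<le> v \<bullet> (Hess (x k) *v v)"
    using cubic_step_hessian_lower_bound[OF step(1) \<eta>
        Hess_lipschitz[where x = "x j" and x' = "x j + s (Suc j)", simplified] err_H]
      assms \<alpha> L_nonneg by (simp add: k step(2))
qed

theorem cubic_newton_complexity:
  "\<exists>k. stop_time s \<epsilon> = enat k \<and>
     real k \<le> (F (x 0) - F_min + (L + 3 * \<alpha> + 4 * \<beta>) * \<epsilon> ^ 3) / ((L + \<alpha> + \<beta>) * \<epsilon> ^ 3) \<and>
     norm (grad (x k)) \<le> (1 / (2 * \<eta>) + L + 2 * \<alpha> + 2 * \<beta>) * \<epsilon> ^ 2 \<and>
     (\<forall>v. - ((1 / (2 * \<eta>) + L + 2 * \<alpha>) * \<epsilon>) * norm v ^ 2 \<le> v \<bullet> (Hess (x k) *v v))"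
proof (cases rule: stop_time_cases[of s \<epsilon>])
  case never
  obtain K :: nat
    where "(F (x 0) - F_min + (L + 3 * \<alpha> + 4 * \<beta>) * \<epsilon> ^ 3) / ((L + \<alpha> + \<beta>) * \<epsilon> ^ 3) < real K"
    using reals_Archimedean2 by blast
  moreover have "real (K + 1) \<le> (F (x 0) - F_min + (L + 3 * \<alpha> + 4 * \<beta>) * \<epsilon> ^ 3) / ((L + \<alpha> + \<beta>) * \<epsilon> ^ 3)"
    by (rule steps_before_stop_le) (use never in auto)
  ultimately show ?thesis by simp
next
  case (at k)
  then show ?thesis
    using steps_before_stop_le[of k] stopping_point_bounds[of k] by auto
qed

end

end
section \<open>The value function of a strongly concave minimax problem\<close>

locale minimax_standing =
  fixes f :: "(real^'m) \<times> (real^'n) \<Rightarrow> real"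
    and g1 :: "(real^'m) \<times> (real^'n) \<Rightarrow> real^'m" and g2 :: "(real^'m) \<times> (real^'n) \<Rightarrow> real^'n"
    and H11 :: "(real^'m) \<times> (real^'n) \<Rightarrow> real^'m^'m" and H12 :: "(real^'m) \<times> (real^'n) \<Rightarrow> real^'n^'m"
    and H21 :: "(real^'m) \<times> (real^'n) \<Rightarrow> real^'m^'n" and H22 :: "(real^'m) \<times> (real^'n) \<Rightarrow> real^'n^'n"
    and L1 L2 \<mu> :: real
  assumes standing: "standing_assumption f g1 g2 H11 H12 H21 H22 L1 L2 \<mu>"
begin

lemma f_has_derivative: "(f has_derivative (\<lambda>p. g1 z \<bullet> fst p + g2 z \<bullet> snd p)) (at z)"
  using standing unfolding standing_assumption_def C2_data_def case_prod_unfold by blast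

lemma g_has_derivative: "((\<lambda>w. (g1 w, g2 w)) has_derivative
   (\<lambda>p. (H11 z *v fst p + H12 z *v snd p, H21 z *v fst p + H22 z *v snd p))) (at z)"
  using standing unfolding standing_assumption_def C2_data_def case_prod_unfold by blast

lemma g1_has_derivative: "(g1 has_derivative (\<lambda>p. H11 z *v fst p + H12 z *v snd p)) (at z)"
  using has_derivative_fst[OF g_has_derivative] by simp

lemma g2_has_derivative: "(g2 has_derivative (\<lambda>p. H21 z *v fst p + H22 z *v snd p)) (at z)"
  using has_derivative_snd[OF g_has_derivative] by simp

lemma g_lipschitz: "norm ((g1 z, g2 z) - (g1 z', g2 z')) \<le> L1 * norm (z - z')"
  using standing unfolding standing_assumption_def by blast

lemma mu_pos: "\<mu> > 0"
  using standing unfolding standing_assumption_def by blast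

lemma strongly_concave_f: "strongly_concave \<mu> (\<lambda>y. f (x, y))"
  using standing unfolding standing_assumption_def by blast

lemma H_lipschitz:
  "mnorm (H11 z - H11 z') \<le> L2 * norm (z - z')"
  "mnorm (H12 z - H12 z') \<le> L2 * norm (z - z')"
  "mnorm (H21 z - H21 z') \<le> L2 * norm (z - z')"
  "mnorm (H22 z - H22 z') \<le> L2 * norm (z - z')"
  using standing unfolding standing_assumption_def by blast+

lemma bdd_below_Phi: "bdd_below (range (Phi f))"
  using standing unfolding standing_assumption_def by (elim conjE)

lemma L1_nonneg: "L1 \<ge> 0"
  by (rule lipschitz_const_nonneg[OF norm_ge_zero g_lipschitz])

lemma L2_nonneg: "L2 \<ge> 0"
  by (rule lipschitz_const_nonneg[OF mnorm_nonneg H_lipschitz(1)])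

lemma f_line_derivative:
  "((\<lambda>t. f (x, y + t *\<^sub>R w)) has_real_derivative (g2 (x, y + t *\<^sub>R w) \<bullet> w)) (at t)"
  using has_real_derivative_along_line[where x = "(x, y)" and s = "(0, w)", OF f_has_derivative]
  by (simp add: algebra_simps)

lemma g2_line_derivative:
  "((\<lambda>t. v \<bullet> g2 (x, y + t *\<^sub>R w)) has_real_derivative (v \<bullet> (H22 (x, y + t *\<^sub>R w) *v w))) (at t)"
  using has_real_derivative_along_line[where x = "(x, y)" and s = "(0, w)",
      OF has_derivative_inner_right[OF g2_has_derivative]]
  by (simp add: algebra_simps)

lemma concave_gradient_ineq:
  "f (x, y') \<le> f (x, y) + g2 (x, y) \<bullet> (y' - y) - \<mu> / 2 * (norm (y' - y))\<^sup>2"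
proof -
  define N where "N = (norm (y' - y))\<^sup>2"
  define \<phi> where "\<phi> t = f (x, y + t *\<^sub>R (y' - y))" for t
  have D: "(\<phi> has_real_derivative (g2 (x, y) \<bullet> (y' - y))) (at 0)"
    using f_line_derivative[of x y "y' - y" 0] unfolding \<phi>_def by simp
  have "f (x, y') - f (x, y) + \<mu> / 2 * N \<le> g2 (x, y) \<bullet> (y' - y)"
  proof (rule has_real_derivative_ge_of_increment[OF D, of _ "\<mu> / 2 * N"])
    fix t :: real assume t: "0 < t" "t < 1"
    have "t * f (x, y') + (1 - t) * f (x, y) + \<mu> / 2 * t * (1 - t) * N
        \<le> f (x, t *\<^sub>R y' + (1 - t) *\<^sub>R y)"
      using strongly_concave_f[of x] t unfolding strongly_concave_def N_def by simp
    also have "t *\<^sub>R y' + (1 - t) *\<^sub>R y = y + t *\<^sub>R (y' - y)" by (simp add: algebra_simps)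
    finally have "t * f (x, y') + (1 - t) * f (x, y) + \<mu> / 2 * t * (1 - t) * N \<le> \<phi> t"
      by (simp add: \<phi>_def)
    moreover have "\<phi> 0 = f (x, y)" by (simp add: \<phi>_def)
    moreover have "t * (f (x, y') - f (x, y) + \<mu> / 2 * N - \<mu> / 2 * N * t)
        = t * f (x, y') + (1 - t) * f (x, y) + \<mu> / 2 * t * (1 - t) * N - f (x, y)"
      by (simp add: field_simps)
    ultimately show "t * (f (x, y') - f (x, y) + \<mu> / 2 * N - \<mu> / 2 * N * t) \<le> \<phi> t - \<phi> 0"
      by linarith
  qed
  then show ?thesis by (simp add: N_def)
qed

lemma g2_strongly_monotone: "(g2 (x, y') - g2 (x, y)) \<bullet> (y' - y) \<le> - \<mu> * (norm (y' - y))\<^sup>2"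
  using concave_gradient_ineq[of x y' y] concave_gradient_ineq[of x y y']
  by (simp add: norm_minus_commute inner_diff_left inner_diff_right)

lemma H22_negative_definite: "v \<bullet> (H22 z *v v) \<le> - \<mu> * (norm v)\<^sup>2"
proof -
  obtain x y where z: "z = (x, y)" by (cases z)
  define \<phi> where "\<phi> t = - (v \<bullet> g2 (x, y + t *\<^sub>R v))" for t
  have D: "(\<phi> has_real_derivative (- (v \<bullet> (H22 (x, y) *v v)))) (at 0)"
    unfolding \<phi>_def using DERIV_minus[OF g2_line_derivative[of v x y v 0]] by simp
  have "\<mu> * (norm v)\<^sup>2 \<le> - (v \<bullet> (H22 (x, y) *v v))"
  proof (rule has_real_derivative_ge_of_increment[OF D, of _ 0])
    fix t :: real assume t: "0 < t" "t < 1"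
    have "t * ((g2 (x, y + t *\<^sub>R v) - g2 (x, y)) \<bullet> v) \<le> t * (- \<mu> * t * (norm v)\<^sup>2)"
      using g2_strongly_monotone[of x "y + t *\<^sub>R v" y] t
      by (simp add: power_mult_distrib power2_eq_square algebra_simps)
    then have "(g2 (x, y + t *\<^sub>R v) - g2 (x, y)) \<bullet> v \<le> - \<mu> * t * (norm v)\<^sup>2"
      by (rule mult_left_le_imp_le) (use t in simp)
    then show "t * (\<mu> * (norm v)\<^sup>2 - 0 * t) \<le> \<phi> t - \<phi> 0"
      by (simp add: \<phi>_def inner_diff_left inner_commute algebra_simps)
  qed
  then show ?thesis using z by simp
qed

lemma norm_H22_ge: "\<mu> * norm v \<le> norm (H22 z *v v)"
proof -
  have "norm v * (\<mu> * norm v) \<le> - (v \<bullet> (H22 z *v v))"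
    using H22_negative_definite[of v z] by (simp add: power2_eq_square algebra_simps)
  also have "\<dots> \<le> norm v * norm (H22 z *v v)"
    using Cauchy_Schwarz_ineq2[of v "H22 z *v v"] by linarith
  finally show ?thesis by (cases "v = 0") auto
qed

lemma exists_maximizer: "\<exists>y. \<forall>y'. f (x, y') \<le> f (x, y)"
proof -
  define S where "S = {y. f (x, 0) \<le> f (x, y)}"
  have "continuous_on UNIV f"
    using f_has_derivative has_derivative_continuous continuous_at_imp_continuous_on by blast
  then have cont: "continuous_on UNIV (\<lambda>y. f (x, y))"
    by (rule continuous_on_compose2) (auto intro!: continuous_intros)
  have "S \<subseteq> cball 0 (2 * norm (g2 (x, 0)) / \<mu>)"
  proof
    fix y assume "y \<in> S"
    then have "\<mu> / 2 * (norm y)\<^sup>2 \<le> g2 (x, 0) \<bullet> y"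
      using concave_gradient_ineq[of x y 0] by (simp add: S_def)
    also have "\<dots> \<le> norm (g2 (x, 0)) * norm y" by (rule norm_cauchy_schwarz)
    finally have "norm y * (\<mu> / 2 * norm y) \<le> norm y * norm (g2 (x, 0))"
      by (simp add: power2_eq_square algebra_simps)
    then have "\<mu> / 2 * norm y \<le> norm (g2 (x, 0))"
      using mu_pos by (cases "norm y = 0") auto
    then show "y \<in> cball 0 (2 * norm (g2 (x, 0)) / \<mu>)"
      using mu_pos by (simp add: field_simps)
  qed
  moreover have "closed S"
    unfolding S_def by (rule closed_Collect_le) (auto intro: cont continuous_on_const)
  ultimately have "compact S"
    by (metis bounded_cball bounded_subset compact_eq_bounded_closed)
  moreover have "S \<noteq> {}" by (auto simp: S_def)
  ultimately obtain y where y: "y \<in> S" and max: "\<forall>y'\<in>S. f (x, y') \<le> f (x, y)"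
    using continuous_attains_sup[OF _ _ continuous_on_subset[OF cont]] by blast
  have "f (x, y') \<le> f (x, y)" for y'
  proof (cases "y' \<in> S")
    case True
    with max show ?thesis by blast
  next
    case False
    with y show ?thesis by (simp add: S_def)
  qed
  then show ?thesis by blast
qed

definition ystar :: "real^'m \<Rightarrow> real^'n" where
  "ystar x = (SOME y. g2 (x, y) = 0)"

lemma g2_ystar: "g2 (x, ystar x) = 0"
proof -
  obtain y where max: "\<forall>y'. f (x, y') \<le> f (x, y)" using exists_maximizer by blast
  have "((\<lambda>t. f (x, y + t *\<^sub>R g2 (x, y))) has_real_derivative (g2 (x, y) \<bullet> g2 (x, y))) (at 0)"
    using f_line_derivative[of x y "g2 (x, y)" 0] by simp
  from DERIV_local_max[OF this zero_less_one] max have "g2 (x, y) = 0" by simp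
  then show ?thesis unfolding ystar_def by (rule someI)
qed

lemma f_le_f_ystar: "f (x, y) \<le> f (x, ystar x)"
proof -
  have "0 \<le> \<mu> / 2 * (norm (y - ystar x))\<^sup>2" using mu_pos by simp
  then show ?thesis using concave_gradient_ineq[of x y "ystar x"] by (simp add: g2_ystar)
qed

lemma Phi_eq_f_ystar: "Phi f x = f (x, ystar x)"
  unfolding Phi_def by (rule cSup_eq_maximum) (auto intro: f_le_f_ystar)

lemma g2_lipschitz_x: "norm (g2 (x', y) - g2 (x, y)) \<le> L1 * norm (x' - x)"
proof -
  have "norm (g2 (x', y) - g2 (x, y)) \<le> norm ((g1 (x', y), g2 (x', y)) - (g1 (x, y), g2 (x, y)))"
    using norm_snd_le[of "g2 (x', y) - g2 (x, y)" "g1 (x', y) - g1 (x, y)"] by simp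
  also have "\<dots> \<le> L1 * norm (x' - x)"
    using g_lipschitz[of "(x', y)" "(x, y)"] by (simp add: norm_Pair)
  finally show ?thesis .
qed

text \<open>Strong monotonicity of \<open>g2\<close> in \<open>y\<close> against its Lipschitz continuity in \<open>x\<close>.\<close>

lemma ystar_lipschitz: "norm (ystar x' - ystar x) \<le> L1 / \<mu> * norm (x' - x)"
proof -
  define N where "N = norm (ystar x' - ystar x)"
  have "\<mu> * N\<^sup>2 \<le> (g2 (x', ystar x) - g2 (x, ystar x)) \<bullet> (ystar x' - ystar x)"
    using g2_strongly_monotone[of x' "ystar x'" "ystar x"] g2_ystar[of x'] g2_ystar[of x]
    by (simp add: N_def inner_diff_left)
  also have "\<dots> \<le> norm (g2 (x', ystar x) - g2 (x, ystar x)) * N"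
    unfolding N_def by (rule norm_cauchy_schwarz)
  also have "\<dots> \<le> L1 * norm (x' - x) * N"
    using g2_lipschitz_x by (intro mult_right_mono) (auto simp: N_def)
  finally have "N * (\<mu> * N) \<le> N * (L1 * norm (x' - x))"
    by (simp add: power2_eq_square algebra_simps)
  then have "\<mu> * N \<le> L1 * norm (x' - x)"
    using L1_nonneg by (cases "N = 0") (auto simp: N_def)
  then show ?thesis using mu_pos by (simp add: N_def field_simps)
qed

lemma H22_inverse: "H22 z ** matrix_inv (H22 z) = mat 1 \<and> matrix_inv (H22 z) ** H22 z = mat 1"
proof -
  have "inj ((*v) (H22 z))"
  proof (rule injI)
    fix a b assume "H22 z *v a = H22 z *v b"
    then have "\<mu> * norm (a - b) \<le> 0"
      using norm_H22_ge[of "a - b" z] by (simp add: matrix_vector_mult_diff_distrib)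
    then show "a = b" using mu_pos by (simp add: mult_le_0_iff)
  qed
  then have "invertible (H22 z)"
    by (simp add: matrix_left_invertible_injective invertible_left_inverse)
  then show ?thesis
    unfolding matrix_inv_def invertible_def by (rule someI_ex)
qed

lemma H22_matrix_inv_apply: "H22 z *v (matrix_inv (H22 z) *v w) = w"
  using H22_inverse[of z] by (simp add: matrix_vector_mul_assoc)

lemma matrix_inv_H22_apply: "matrix_inv (H22 z) *v (H22 z *v v) = v"
  using H22_inverse[of z] by (simp add: matrix_vector_mul_assoc)

lemma norm_matrix_inv_H22_le: "norm (matrix_inv (H22 z) *v w) \<le> norm w / \<mu>"
  using norm_H22_ge[of "matrix_inv (H22 z) *v w" z] mu_pos
  by (simp add: H22_matrix_inv_apply field_simps)

lemma norm_H21_le: "norm (H21 z *v h) \<le> L1 * norm h"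
proof -
  have "norm (H11 z *v h, H21 z *v h) \<le> L1 * norm (h, 0::real^'n)"
    using has_derivative_norm_le_of_lipschitz[OF g_has_derivative[of z] g_lipschitz, where w = "(h, 0)"]
    by simp
  from order_trans[OF norm_snd_le this] show ?thesis by (simp add: norm_Pair)
qed

lemma norm_H12_le: "norm (H12 z *v k) \<le> L1 * norm k"
proof -
  have "norm (H12 z *v k, H22 z *v k) \<le> L1 * norm (0::real^'m, k)"
    using has_derivative_norm_le_of_lipschitz[OF g_has_derivative[of z] g_lipschitz, where w = "(0, k)"]
    by simp
  from order_trans[OF norm_fst_le this] show ?thesis by (simp add: norm_Pair)
qed

definition zstar :: "real^'m \<Rightarrow> (real^'m) \<times> (real^'n)" where
  "zstar x = (x, ystar x)"

definition schur :: "(real^'m) \<times> (real^'n) \<Rightarrow> real^'m^'m" where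
  "schur z = schurG (H11 z) (H12 z) (H21 z) (H22 z)"

lemma norm_zstar_diff_le: "norm (zstar x' - zstar x) \<le> (1 + L1 / \<mu>) * norm (x' - x)"
proof -
  have "norm (zstar x' - zstar x) \<le> norm (x' - x) + norm (ystar x' - ystar x)"
    using norm_Pair_le[of "x' - x" "ystar x' - ystar x"] by (simp add: zstar_def)
  also have "\<dots> \<le> norm (x' - x) + L1 / \<mu> * norm (x' - x)" using ystar_lipschitz by simp
  finally show ?thesis by (simp add: algebra_simps)
qed

text \<open>Implicit differentiation of \<open>g2 (x, ystar x) = 0\<close>, carried out by hand: first \<open>ystar\<close>
  satisfies the linearised equation up to \<open>o(\<parallel>x' - x\<parallel>)\<close>, then \<open>H22\<close> is inverted with the bound
  \<open>1 / \<mu>\<close>.\<close>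

lemma ystar_linearised_equation:
  assumes e: "e > 0"
  shows "\<exists>d>0. \<forall>x'. norm (x' - x) < d \<longrightarrow>
    norm (H21 (zstar x) *v (x' - x) + H22 (zstar x) *v (ystar x' - ystar x)) \<le> e * norm (x' - x)"
proof -
  define c where "c = 1 + L1 / \<mu>"
  define z where "z = zstar x"
  have c: "c \<ge> 1" using L1_nonneg mu_pos by (simp add: c_def)
  then have "e / c > 0" using e by simp
  then obtain d where d: "d > 0" and rem: "\<And>w. norm (w - z) < d \<Longrightarrow>
      norm (g2 w - g2 z - (H21 z *v fst (w - z) + H22 z *v snd (w - z))) \<le> e / c * norm (w - z)"
    using g2_has_derivative[of z] unfolding has_derivative_at_alt by blast
  show ?thesis
  proof (intro exI[of _ "d / c"] conjI allI impI)
    show "d / c > 0" using d c by simp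
    fix x' assume x': "norm (x' - x) < d / c"
    have near: "norm (zstar x' - z) \<le> c * norm (x' - x)"
      using norm_zstar_diff_le by (simp add: z_def c_def)
    moreover have "c * norm (x' - x) < d" using x' c by (simp add: pos_less_divide_eq mult.commute)
    ultimately have "norm (g2 (zstar x') - g2 z - (H21 z *v (x' - x) + H22 z *v (ystar x' - ystar x)))
        \<le> e / c * norm (zstar x' - z)"
      using rem[of "zstar x'"] by (simp add: z_def zstar_def)
    moreover have "g2 (zstar x') - g2 z - (H21 z *v (x' - x) + H22 z *v (ystar x' - ystar x))
        = - (H21 z *v (x' - x) + H22 z *v (ystar x' - ystar x))"
      using g2_ystar[of x'] g2_ystar[of x] by (simp add: z_def zstar_def)
    ultimately have "norm (H21 z *v (x' - x) + H22 z *v (ystar x' - ystar x)) \<le> e / c * norm (zstar x' - z)"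
      by (metis norm_minus_cancel)
    also have "\<dots> \<le> e / c * (c * norm (x' - x))"
      using near e c by (intro mult_left_mono) auto
    finally show "norm (H21 (zstar x) *v (x' - x) + H22 (zstar x) *v (ystar x' - ystar x)) \<le> e * norm (x' - x)"
      using c by (simp add: z_def)
  qed
qed

lemma ystar_has_derivative:
  "(ystar has_derivative (\<lambda>h. - (matrix_inv (H22 (zstar x)) ** H21 (zstar x)) *v h)) (at x)"
  unfolding has_derivative_at_alt
proof (intro conjI allI impI)
  show "bounded_linear ((*v) (- (matrix_inv (H22 (zstar x)) ** H21 (zstar x))))" by simp
  fix e :: real assume "e > 0"
  then obtain d where d: "d > 0" and lin: "\<And>x'. norm (x' - x) < d \<Longrightarrow>
      norm (H21 (zstar x) *v (x' - x) + H22 (zstar x) *v (ystar x' - ystar x)) \<le> e * \<mu> * norm (x' - x)"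
    using ystar_linearised_equation[of "e * \<mu>" x] mu_pos by auto
  show "\<exists>d>0. \<forall>x'. norm (x' - x) < d \<longrightarrow>
    norm (ystar x' - ystar x - - (matrix_inv (H22 (zstar x)) ** H21 (zstar x)) *v (x' - x)) \<le> e * norm (x' - x)"
  proof (intro exI[of _ d] conjI allI impI d)
    fix x' assume x': "norm (x' - x) < d"
    define z h k where "z = zstar x" and "h = x' - x" and "k = ystar x' - ystar x"
    have "k + (matrix_inv (H22 z) ** H21 z) *v h = matrix_inv (H22 z) *v (H21 z *v h + H22 z *v k)"
      by (simp add: matrix_vector_mul_assoc[symmetric] matrix_vector_right_distrib matrix_inv_H22_apply)
    then have "norm (k + (matrix_inv (H22 z) ** H21 z) *v h) \<le> norm (H21 z *v h + H22 z *v k) / \<mu>"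
      using norm_matrix_inv_H22_le by simp
    also have "\<dots> \<le> e * norm h"
      using lin[OF x'] mu_pos by (simp add: z_def h_def k_def divide_le_eq ac_simps)
    finally show "norm (ystar x' - ystar x - - (matrix_inv (H22 (zstar x)) ** H21 (zstar x)) *v (x' - x))
        \<le> e * norm (x' - x)"
      by (simp add: z_def h_def k_def matrix_vector_mult_uminus_left)
  qed
qed

lemma zstar_has_derivative:
  "(zstar has_derivative (\<lambda>h. (h, - (matrix_inv (H22 (zstar x)) ** H21 (zstar x)) *v h))) (at x)"
proof -
  have "zstar = (\<lambda>x. (x, ystar x))" by (simp add: zstar_def fun_eq_iff)
  then show ?thesis
    using has_derivative_Pair[OF has_derivative_ident ystar_has_derivative[of x]] by simp
qed

lemma Phi_has_derivative: "(Phi f has_derivative (\<lambda>h. g1 (zstar x) \<bullet> h)) (at x)"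
proof -
  have "Phi f = f \<circ> zstar" by (auto simp: Phi_eq_f_ystar zstar_def)
  moreover have "g2 (zstar x) = 0" by (simp add: zstar_def g2_ystar)
  ultimately show ?thesis
    using has_derivative_compose[OF zstar_has_derivative[of x] f_has_derivative] by (simp add: o_def)
qed

lemma vgrad_Phi: "vgrad (Phi f) x = g1 (zstar x)"
proof -
  have "frechet_derivative (Phi f) (at x) = (\<lambda>h. g1 (zstar x) \<bullet> h)"
    by (rule frechet_derivative_at[OF Phi_has_derivative, symmetric])
  then show ?thesis by (simp add: vgrad_def inner_axis vec_eq_iff)
qed

lemma schur_apply:
  "schur z *v v = H11 z *v v - H12 z *v (matrix_inv (H22 z) *v (H21 z *v v))"
  by (simp add: schur_def schurG_def matrix_vector_mult_diff_rdistrib matrix_vector_mul_assoc matrix_mul_assoc)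

lemma vgrad_Phi_has_derivative: "(vgrad (Phi f) has_derivative (\<lambda>h. schur (zstar x) *v h)) (at x)"
proof -
  have "(\<lambda>h. H11 (zstar x) *v h + H12 (zstar x) *v (- (matrix_inv (H22 (zstar x)) ** H21 (zstar x)) *v h))
      = (\<lambda>h. schur (zstar x) *v h)"
    by (simp add: fun_eq_iff schur_apply matrix_vector_mult_uminus_left matrix_vector_mult_uminus_right
        matrix_vector_mul_assoc[symmetric])
  moreover have "vgrad (Phi f) = (\<lambda>x. g1 (zstar x))" by (simp add: fun_eq_iff vgrad_Phi)
  ultimately show ?thesis
    using has_derivative_compose[OF zstar_has_derivative[of x] g1_has_derivative] by simp
qed

lemma hess_Phi: "hess (Phi f) x = schur (zstar x)"
proof -
  have "frechet_derivative (vgrad (Phi f)) (at x) = (\<lambda>h. schur (zstar x) *v h)"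
    by (rule frechet_derivative_at[OF vgrad_Phi_has_derivative, symmetric])
  then show ?thesis by (simp add: hess_def matrix_of_matrix_vector_mul)
qed

lemma schur_diff_apply:
  assumes p: "p = matrix_inv (H22 z') *v (H21 z' *v v)"
  shows "(schur z' - schur z) *v v
      = (H11 z' - H11 z) *v v - ((H12 z' - H12 z) *v p
          + H12 z *v (matrix_inv (H22 z) *v ((H21 z' - H21 z) *v v - (H22 z' - H22 z) *v p)))"
proof -
  define a b r where "a = H21 z' *v v" and "b = H21 z *v v"
    and "r = (H21 z' - H21 z) *v v - (H22 z' - H22 z) *v p"
  have p_a: "matrix_inv (H22 z') *v a = p" by (simp add: p a_def)
  have "H22 z *v p = r + b"
    using H22_matrix_inv_apply[of z' a, unfolded p_a]
    by (simp add: r_def a_def b_def matrix_vector_mult_diff_rdistrib)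
  then have "p - matrix_inv (H22 z) *v b = matrix_inv (H22 z) *v r"
    using matrix_inv_H22_apply[of z p] by (metis matrix_vector_mult_diff_distrib add_diff_cancel_right')
  then show ?thesis
    unfolding r_def[symmetric]
    by (simp add: schur_apply a_def[symmetric] b_def[symmetric] p_a matrix_vector_mult_diff_rdistrib
        matrix_vector_mult_diff_distrib algebra_simps)
qed

text \<open>Each of the three factors of \<open>H12 H22\<inverse> H21\<close> changes by \<open>O(L2 \<delta>)\<close> and the other two are
  bounded by \<open>L1\<close> and \<open>1 / \<mu>\<close>; this gives the factor \<open>(1 + \<kappa>)\<^sup>2\<close>, \<open>\<kappa> = L1 / \<mu>\<close>.\<close>

lemma schur_lipschitz:
  "norm ((schur z' - schur z) *v v) \<le> L2 * (1 + L1 / \<mu>)\<^sup>2 * norm (z' - z) * norm v"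
proof -
  define \<kappa> \<delta> where "\<kappa> = L1 / \<mu>" and "\<delta> = norm (z' - z)"
  define p where "p = matrix_inv (H22 z') *v (H21 z' *v v)"
  define r where "r = (H21 z' - H21 z) *v v - (H22 z' - H22 z) *v p"
  note H_increment_le = H_lipschitz[THEN norm_matrix_vector_le_of_mnorm_le]
  have \<kappa>: "\<kappa> \<ge> 0" using L1_nonneg mu_pos by (simp add: \<kappa>_def)
  have LL: "L2 * \<delta> \<ge> 0" using L2_nonneg by (simp add: \<delta>_def)
  have np: "norm p \<le> \<kappa> * norm v"
    using order_trans[OF norm_matrix_inv_H22_le divide_right_mono[OF norm_H21_le]] mu_pos
    by (simp add: p_def \<kappa>_def)
  have "norm ((schur z' - schur z) *v v) \<le> norm ((H11 z' - H11 z) *v v) + norm ((H12 z' - H12 z) *v p)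
      + norm (H12 z *v (matrix_inv (H22 z) *v r))"
    unfolding schur_diff_apply[OF p_def] r_def[symmetric]
    by (smt (verit) norm_triangle_ineq norm_triangle_ineq4)
  also have "\<dots> \<le> L2 * \<delta> * norm v + L2 * \<delta> * (\<kappa> * norm v) + \<kappa> * (L2 * \<delta> * norm v + L2 * \<delta> * (\<kappa> * norm v))"
  proof -
    have "norm ((H12 z' - H12 z) *v p) \<le> L2 * \<delta> * (\<kappa> * norm v)"
      using H_increment_le(2)[of z' z p] mult_left_mono[OF np LL] by (simp add: \<delta>_def)
    moreover have "norm r \<le> L2 * \<delta> * norm v + L2 * \<delta> * (\<kappa> * norm v)"
      using norm_triangle_ineq4[of "(H21 z' - H21 z) *v v" "(H22 z' - H22 z) *v p"]
        H_increment_le(3)[of z' z v] H_increment_le(4)[of z' z p] mult_left_mono[OF np LL]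
      by (simp add: r_def \<delta>_def)
    moreover have "norm (H12 z *v (matrix_inv (H22 z) *v r)) \<le> \<kappa> * norm r"
      using order_trans[OF norm_H12_le mult_left_mono[OF norm_matrix_inv_H22_le L1_nonneg]]
      by (simp add: \<kappa>_def)
    ultimately show ?thesis
      using H_increment_le(1)[of z' z v] mult_left_mono[of "norm r" _ \<kappa>] \<kappa>
      by (smt (verit) \<delta>_def)
  qed
  also have "\<dots> = L2 * (1 + \<kappa>)\<^sup>2 * \<delta> * norm v" by (simp add: power2_eq_square algebra_simps)
  finally show ?thesis by (simp add: \<kappa>_def \<delta>_def)
qed

lemma hess_Phi_lipschitz:
  "norm ((hess (Phi f) x' - hess (Phi f) x) *v v) \<le> L2 * (1 + L1 / \<mu>) ^ 3 * norm (x' - x) * norm v"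
proof -
  define k where "k = 1 + L1 / \<mu>"
  have k: "k \<ge> 1" using L1_nonneg mu_pos by (simp add: k_def)
  have "norm ((hess (Phi f) x' - hess (Phi f) x) *v v) \<le> L2 * k\<^sup>2 * norm (zstar x' - zstar x) * norm v"
    using schur_lipschitz by (simp add: hess_Phi k_def)
  also have "\<dots> \<le> L2 * k\<^sup>2 * (k * norm (x' - x)) * norm v"
    using norm_zstar_diff_le[of x' x] L2_nonneg
    by (intro mult_right_mono mult_left_mono) (auto simp: k_def)
  finally show ?thesis by (simp add: k_def power2_eq_square power3_eq_cube ac_simps)
qed

end

sublocale minimax_standing \<subseteq> Phi: lipschitz_hessian "Phi f" "vgrad (Phi f)" "hess (Phi f)" "L2 * (1 + L1 / \<mu>) ^ 3"
proof
  show "(Phi f has_derivative (\<lambda>h. vgrad (Phi f) x \<bullet> h)) (at x)" for x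
    using Phi_has_derivative by (simp add: vgrad_Phi)
  show "(vgrad (Phi f) has_derivative (\<lambda>h. hess (Phi f) x *v h)) (at x)" for x
    using vgrad_Phi_has_derivative by (simp add: hess_Phi)
  show "0 \<le> L2 * (1 + L1 / \<mu>) ^ 3"
    using L2_nonneg L1_nonneg mu_pos by simp
qed (rule hess_Phi_lipschitz)

lemma cubic_gda_cubic_newton_iterates:
  "cubic_gda g1 g2 H11 H12 H21 H22 \<eta> \<eta>y \<epsilon> N x y s \<Longrightarrow>
    cubic_newton_iterates (\<lambda>t. g1 (x t, y (Suc t)))
      (\<lambda>t. schurG (H11 (x t, y (Suc t))) (H12 (x t, y (Suc t))) (H21 (x t, y (Suc t))) (H22 (x t, y (Suc t))))
      \<eta> \<epsilon> x s"
  unfolding cubic_gda_def cubic_newton_iterates_def by blast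

lemma scubic_gda_cubic_newton_iterates:
  "scubic_gda Nf G1 G2 H11 H12 H21 H22 \<mu> \<eta> \<epsilon> N \<xi> B1 B11 B12 B21 B22 x y s \<Longrightarrow>
    cubic_newton_iterates (\<lambda>t. mb_avg (B1 t) (\<lambda>i. G1 i (x t, y (Suc t))))
      (\<lambda>t. schurG (mb_avg (B11 t) (\<lambda>i. H11 i (x t, y (Suc t)))) (mb_avg (B12 t) (\<lambda>i. H12 i (x t, y (Suc t))))
                  (mb_avg (B21 t) (\<lambda>i. H21 i (x t, y (Suc t)))) (mb_avg (B22 t) (\<lambda>i. H22 i (x t, y (Suc t)))))
      \<eta> \<epsilon> x s"
  unfolding scubic_gda_def cubic_newton_iterates_def by blast

theorem lemma5:
  fixes f :: "(real^'m) \<times> (real^'n) \<Rightarrow> real"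
    and g1 :: "(real^'m) \<times> (real^'n) \<Rightarrow> real^'m" and g2 :: "(real^'m) \<times> (real^'n) \<Rightarrow> real^'n"
    and H11 :: "(real^'m) \<times> (real^'n) \<Rightarrow> real^'m^'m" and H12 :: "(real^'m) \<times> (real^'n) \<Rightarrow> real^'n^'m"
    and H21 :: "(real^'m) \<times> (real^'n) \<Rightarrow> real^'m^'n" and H22 :: "(real^'m) \<times> (real^'n) \<Rightarrow> real^'n^'n"
    and L1 L2 \<mu> \<alpha> \<beta> \<epsilon>' \<eta>x :: real and x0 :: "real^'m" and T :: nat
    and Nf :: nat and fi :: "nat \<Rightarrow> (real^'m) \<times> (real^'n) \<Rightarrow> real"
    and gi1 :: "nat \<Rightarrow> (real^'m) \<times> (real^'n) \<Rightarrow> real^'m" and gi2 :: "nat \<Rightarrow> (real^'m) \<times> (real^'n) \<Rightarrow> real^'n"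
    and Hi11 :: "nat \<Rightarrow> (real^'m) \<times> (real^'n) \<Rightarrow> real^'m^'m" and Hi12 :: "nat \<Rightarrow> (real^'m) \<times> (real^'n) \<Rightarrow> real^'n^'m"
    and Hi21 :: "nat \<Rightarrow> (real^'m) \<times> (real^'n) \<Rightarrow> real^'m^'n" and Hi22 :: "nat \<Rightarrow> (real^'m) \<times> (real^'n) \<Rightarrow> real^'n^'n"
  assumes SA: "standing_assumption f g1 g2 H11 H12 H21 H22 L1 L2 \<mu>"
    and alpha: "\<alpha> > 0" and beta: "\<beta> > 0" and eps: "\<epsilon>' > 0" and etax: "\<eta>x > 0"
    and etax_le: "\<eta>x \<le> 1 / (9 * (L2 * (1 + L1 / \<mu>) ^ 3) + 18 * \<alpha> + 28 * \<beta>)"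
    and T_ge: "(Phi f x0 - (INF x. Phi f x) + (L2 * (1 + L1 / \<mu>) ^ 3 + 3 * \<alpha> + 4 * \<beta>) * \<epsilon>' ^ 3)
                 / ((L2 * (1 + L1 / \<mu>) ^ 3 + \<alpha> + \<beta>) * \<epsilon>' ^ 3) \<le> real T"
  shows
   "(\<forall>\<eta>y N x y s. \<eta>y > 0 \<and> x 0 = x0 \<and> cubic_gda g1 g2 H11 H12 H21 H22 \<eta>x \<eta>y \<epsilon>' N x y s \<and>
       (\<forall>t. enat t < stop_time s \<epsilon>' \<longrightarrow>
          norm (vgrad (Phi f) (x t) - g1 (x t, y (Suc t))) \<le> \<beta> * (norm (s t) ^ 2 + \<epsilon>' ^ 2) \<and>
          mnorm (hess (Phi f) (x t) -
                 schurG (H11 (x t, y (Suc t))) (H12 (x t, y (Suc t)))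
                        (H21 (x t, y (Suc t))) (H22 (x t, y (Suc t)))) \<le> \<alpha> * (norm (s t) + \<epsilon>'))
     \<longrightarrow> (\<exists>k. stop_time s \<epsilon>' = enat k \<and>
            real k \<le> (Phi f x0 - (INF x. Phi f x) + (L2 * (1 + L1 / \<mu>) ^ 3 + 3 * \<alpha> + 4 * \<beta>) * \<epsilon>' ^ 3)
                       / ((L2 * (1 + L1 / \<mu>) ^ 3 + \<alpha> + \<beta>) * \<epsilon>' ^ 3) \<and>
            (Phi f x0 - (INF x. Phi f x) + (L2 * (1 + L1 / \<mu>) ^ 3 + 3 * \<alpha> + 4 * \<beta>) * \<epsilon>' ^ 3)
                       / ((L2 * (1 + L1 / \<mu>) ^ 3 + \<alpha> + \<beta>) * \<epsilon>' ^ 3) \<le> real T \<and>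
            norm (vgrad (Phi f) (x k)) \<le> (1 / (2 * \<eta>x) + L2 * (1 + L1 / \<mu>) ^ 3 + 2 * \<alpha> + 2 * \<beta>) * \<epsilon>' ^ 2 \<and>
            (\<forall>v. - ((1 / (2 * \<eta>x) + L2 * (1 + L1 / \<mu>) ^ 3 + 2 * \<alpha>) * \<epsilon>') * norm v ^ 2
                   \<le> v \<bullet> (hess (Phi f) (x k) *v v))))
    \<and>
    ((Nf \<ge> 1 \<and> (\<forall>i<Nf. C2_data (fi i) (gi1 i) (gi2 i) (Hi11 i) (Hi12 i) (Hi21 i) (Hi22 i) \<and>
                         (\<forall>x. strongly_concave \<mu> (\<lambda>y. fi i (x, y)))) \<and>
      (\<forall>z. f z = (\<Sum>i<Nf. fi i z) / real Nf))
     \<longrightarrow> (\<forall>N \<xi> B1 B11 B12 B21 B22 x y s.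
           x 0 = x0 \<and>
           scubic_gda Nf gi1 gi2 Hi11 Hi12 Hi21 Hi22 \<mu> \<eta>x \<epsilon>' N \<xi> B1 B11 B12 B21 B22 x y s \<and>
           (\<forall>t. enat t < stop_time s \<epsilon>' \<longrightarrow>
              norm (vgrad (Phi f) (x t) - mb_avg (B1 t) (\<lambda>i. gi1 i (x t, y (Suc t))))
                \<le> \<beta> * (norm (s t) ^ 2 + \<epsilon>' ^ 2) \<and>
              mnorm (hess (Phi f) (x t) -
                     schurG (mb_avg (B11 t) (\<lambda>i. Hi11 i (x t, y (Suc t))))
                            (mb_avg (B12 t) (\<lambda>i. Hi12 i (x t, y (Suc t))))
                            (mb_avg (B21 t) (\<lambda>i. Hi21 i (x t, y (Suc t))))
                            (mb_avg (B22 t) (\<lambda>i. Hi22 i (x t, y (Suc t)))))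
                \<le> \<alpha> * (norm (s t) + \<epsilon>'))
         \<longrightarrow> (\<exists>k. stop_time s \<epsilon>' = enat k \<and>
                real k \<le> (Phi f x0 - (INF x. Phi f x) + (L2 * (1 + L1 / \<mu>) ^ 3 + 3 * \<alpha> + 4 * \<beta>) * \<epsilon>' ^ 3)
                           / ((L2 * (1 + L1 / \<mu>) ^ 3 + \<alpha> + \<beta>) * \<epsilon>' ^ 3) \<and>
                (Phi f x0 - (INF x. Phi f x) + (L2 * (1 + L1 / \<mu>) ^ 3 + 3 * \<alpha> + 4 * \<beta>) * \<epsilon>' ^ 3)
                           / ((L2 * (1 + L1 / \<mu>) ^ 3 + \<alpha> + \<beta>) * \<epsilon>' ^ 3) \<le> real T \<and>
                norm (vgrad (Phi f) (x k)) \<le> (1 / (2 * \<eta>x) + L2 * (1 + L1 / \<mu>) ^ 3 + 2 * \<alpha> + 2 * \<beta>) * \<epsilon>' ^ 2 \<and>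
                (\<forall>v. - ((1 / (2 * \<eta>x) + L2 * (1 + L1 / \<mu>) ^ 3 + 2 * \<alpha>) * \<epsilon>') * norm v ^ 2
                       \<le> v \<bullet> (hess (Phi f) (x k) *v v)))))"
proof -
  interpret minimax_standing f g1 g2 H11 H12 H21 H22 L1 L2 \<mu>
    using SA by (rule minimax_standing.intro)
  have "(INF x. Phi f x) \<le> Phi f x" for x
    by (rule cINF_lower[OF bdd_below_Phi]) simp
  note complexity = Phi.cubic_newton_complexity[OF this alpha beta eps etax etax_le]
  show ?thesis
    using complexity[OF cubic_gda_cubic_newton_iterates] complexity[OF scubic_gda_cubic_newton_iterates] T_ge
    by auto
qed

end
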